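(* Let $G=GL(\infty,F_2)\ltimes F_2^\infty$. For $g\in GL(\infty,F_2)$ let $f_g=\frac{1}{\#R(g-I)}\sum_{v\in R(g-I)}u_v\in L(F_2^\infty)$, where $R(g-I)$ is the (finite) range of $g-I$. Let $\mathcal M_{exo}$ be the von Neumann subalgebra of $L(G)$ generated by $L(F_2^\infty)$ together with the elements $u_gf_g$, $g\in GL(\infty,F_2)$. Then $\mathcal M_{exo}$ is a $G$-invariant von Neumann subalgebra of $L(G)$ which is not of the form $L(N)$ for any normal subgroup $N\trianglelefteq G$.
   Context: For a countable discrete group $G$, $L(G)$ is the group von Neumann algebra generated by the left regular unitaries $u_g$ on $\ell^2(G)$; for a subgroup $N$, $L(N)$ is the von Neumann subalgebra generated by $\{u_g:g\in N\}$. A von Neumann subalgebra $\mathcal M\subseteq L(G)$ is $G$-invariant if $u_g\mathcal M u_g^*\subseteq\mathcal M$ for all $g\in G$. $F_2$ is the field with two elements and $F_2^\infty=\bigoplus_{\mathbb N}F_2$ is the space of finitely supported column vectors, regarded as an abelian group under addition. $GL(\infty,F_2)$ is the group of invertible $\mathbb N\times\mathbb N$ matrices $M$ over $F_2$ with $M_{ij}\neq\delta_{ij}$ for only finitely many $(i,j)$, acting on $F_2^\infty$ by matrix multiplication; $I$ is the identity matrix. $G=GL(\infty,F_2)\ltimes F_2^\infty$ is the semidirect product with $gvg^{-1}=g(v)$. *)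

theory Defs
  imports "HOL-Analysis.Analysis" "HOL-Library.Z2" "HOL-Algebra.Coset"
begin

type_synonym vec2 = "nat \<Rightarrow> bit"
type_synonym mat2 = "nat \<Rightarrow> nat \<Rightarrow> bit"

definition fsupp :: "vec2 \<Rightarrow> bool" where
  "fsupp v \<longleftrightarrow> finite {i. v i \<noteq> 0}"

definition idm :: mat2 where
  "idm = (\<lambda>i j. if i = j then 1 else 0)"

definition finitary :: "mat2 \<Rightarrow> bool" where
  "finitary M \<longleftrightarrow> finite {(i, j). M i j \<noteq> idm i j}"

text \<open>Matrix times vector and matrix product (the sums are over finite sets
  for finitely supported vectors / finitary matrices).\<close>
definition mv :: "mat2 \<Rightarrow> vec2 \<Rightarrow> vec2" where
  "mv M v = (\<lambda>i. \<Sum>j\<in>{j. v j \<noteq> 0}. M i j * v j)"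

definition mm :: "mat2 \<Rightarrow> mat2 \<Rightarrow> mat2" where
  "mm A B = (\<lambda>i k. \<Sum>j\<in>{j. A i j \<noteq> 0}. A i j * B j k)"

definition GLinf :: "mat2 set" where
  "GLinf = {M. finitary M \<and> (\<exists>B. finitary B \<and> mm M B = idm \<and> mm B M = idm)}"

definition minv :: "mat2 \<Rightarrow> mat2" where
  "minv M = (SOME B. finitary B \<and> mm M B = idm \<and> mm B M = idm)"

text \<open>A pair (g, v) stands for the group element v g (v in F_2^infinity, g in GL),
  so that (v g)(w h) = (v + g(w)) (g h), matching g w g^{-1} = g(w).\<close>

typedef grp = "{p :: mat2 \<times> vec2. fst p \<in> GLinf \<and> fsupp (snd p)}"
proof
  have "mm idm idm = idm"
  proof -
    have "\<And>i k. (\<Sum>j\<in>{j. idm i j \<noteq> 0}. idm i j * idm j k) = idm i k"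
    proof -
      fix i k
      have "{j. idm i j \<noteq> 0} = {i}" by (auto simp: idm_def)
      then show "(\<Sum>j\<in>{j. idm i j \<noteq> 0}. idm i j * idm j k) = idm i k"
        by (simp add: idm_def)
    qed
    then show ?thesis unfolding mm_def by blast
  qed
  moreover have "finitary idm" by (simp add: finitary_def)
  ultimately show "(idm, (\<lambda>_. 0)) \<in> {p :: mat2 \<times> vec2. fst p \<in> GLinf \<and> fsupp (snd p)}"
    by (auto simp: GLinf_def fsupp_def)
qed

definition gmul :: "grp \<Rightarrow> grp \<Rightarrow> grp" where
  "gmul x y = (case Rep_grp x of (g, v) \<Rightarrow> case Rep_grp y of (h, w) \<Rightarrow>
      Abs_grp (mm g h, (\<lambda>i. v i + mv g w i)))"

definition gone :: grp where
  "gone = Abs_grp (idm, (\<lambda>_. 0))"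

definition ginv :: "grp \<Rightarrow> grp" where
  "ginv x = (case Rep_grp x of (g, v) \<Rightarrow> Abs_grp (minv g, (\<lambda>i. - mv (minv g) v i)))"

definition Ggrp :: "grp monoid" where
  "Ggrp = \<lparr>carrier = UNIV, mult = gmul, one = gone\<rparr>"

definition vecG :: "vec2 \<Rightarrow> grp" where
  "vecG v = Abs_grp (idm, v)"

definition matG :: "mat2 \<Rightarrow> grp" where
  "matG g = Abs_grp (g, (\<lambda>_. 0))"

definition Vsub :: "grp set" where
  "Vsub = vecG ` {v. fsupp v}"

type_synonym vect = "grp \<Rightarrow> complex"
type_synonym oper = "vect \<Rightarrow> vect"

definition l2 :: "vect set" where
  "l2 = {\<xi>. (\<lambda>x. (cmod (\<xi> x))\<^sup>2) summable_on UNIV}"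

definition linner :: "vect \<Rightarrow> vect \<Rightarrow> complex" where
  "linner \<xi> \<eta> = infsum (\<lambda>x. cnj (\<xi> x) * \<eta> x) UNIV"

definition lnorm :: "vect \<Rightarrow> real" where
  "lnorm \<xi> = sqrt (infsum (\<lambda>x. (cmod (\<xi> x))\<^sup>2) UNIV)"

text \<open>Bounded linear operators on l^2(G); as a normalisation, operators are
  required to vanish outside l^2(G), so that equality of operators is equality
  of functions.\<close>
definition bop :: "oper \<Rightarrow> bool" where
  "bop T \<longleftrightarrow> (\<forall>\<xi>\<in>l2. T \<xi> \<in> l2)
     \<and> (\<forall>\<xi>\<in>l2. \<forall>\<eta>\<in>l2. \<forall>a b::complex.
          T (\<lambda>x. a * \<xi> x + b * \<eta> x) = (\<lambda>x. a * T \<xi> x + b * T \<eta> x))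
     \<and> (\<exists>C. \<forall>\<xi>\<in>l2. lnorm (T \<xi>) \<le> C * lnorm \<xi>)
     \<and> (\<forall>\<xi>. \<xi> \<notin> l2 \<longrightarrow> T \<xi> = (\<lambda>_. 0))"

definition adj :: "oper \<Rightarrow> oper" where
  "adj T = (THE S. bop S \<and> (\<forall>\<xi>\<in>l2. \<forall>\<eta>\<in>l2. linner (T \<xi>) \<eta> = linner \<xi> (S \<eta>)))"

definition comm :: "oper set \<Rightarrow> oper set" where
  "comm S = {T. bop T \<and> (\<forall>A\<in>S. T \<circ> A = A \<circ> T)}"

text \<open>The von Neumann algebra generated by a set S of bounded operators:
  by the bicommutant theorem, the double commutant of S together with its adjoints.\<close>
definition vNgen :: "oper set \<Rightarrow> oper set" where
  "vNgen S = comm (comm (S \<union> adj ` S))"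

definition is_vNa :: "oper set \<Rightarrow> bool" where
  "is_vNa M \<longleftrightarrow> M \<subseteq> Collect bop \<and> (\<forall>T\<in>M. adj T \<in> M) \<and> comm (comm M) = M"

definition uop :: "grp \<Rightarrow> oper" where
  "uop g \<xi> = (if \<xi> \<in> l2 then (\<lambda>h. \<xi> (gmul (ginv g) h)) else (\<lambda>_. 0))"

definition LG :: "grp set \<Rightarrow> oper set" where
  "LG N = vNgen (uop ` N)"

definition G_invariant :: "oper set \<Rightarrow> bool" where
  "G_invariant M \<longleftrightarrow> (\<forall>g. \<forall>T\<in>M. uop g \<circ> T \<circ> adj (uop g) \<in> M)"

definition Rng :: "mat2 \<Rightarrow> vec2 set" where
  "Rng g = {w. \<exists>v. fsupp v \<and> w = (\<lambda>i. mv g v i - v i)}"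

definition fop :: "mat2 \<Rightarrow> oper" where
  "fop g \<xi> = (\<lambda>h. (1 / of_nat (card (Rng g))) * (\<Sum>v\<in>Rng g. uop (vecG v) \<xi> h))"

definition Mexo :: "oper set" where
  "Mexo = vNgen (LG Vsub \<union> {uop (matG g) \<circ> fop g | g. g \<in> GLinf})"

end

theory Submission
  imports Defs
begin

(* Being the double commutant of a self-adjoint set of bounded operators, M_exo is a von Neumann
  algebra, and it lies in L(G) because each f_g is a finite average of translations u_v.
  Conjugation by u_k, k in GL, maps u_g f_g to u_(k g k^-1) f_(k g k^-1), because
  R(k g k^-1 - I) = k R(g - I).  Conjugation by u_w, w in V, does nothing, because every generator
  commutes with L(V): in G we have g(w) g = w g d with d = w + g^-1(w) in R(g - I), and f_g
  absorbs translations by the subgroup R(g - I).  So M_exo is G-invariant and commutes with L(V).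
  If M_exo = L(N), every element of N then commutes with V; the centraliser of V in G is V, so
  L(N) is contained in L(V).  But for g <> I the vector u_g f_g delta_1 takes the value
  1 / #R(g - I) at g, outside V, so u_g f_g does not commute with the projection onto l2(V),
  which commutes with L(V). *)

section \<open>Square-summable functions on G\<close>

lemma mem_l2_iff: "\<xi> \<in> l2 \<longleftrightarrow> (\<lambda>x. (cmod (\<xi> x))\<^sup>2) summable_on UNIV"
  by (simp add: l2_def)

lemma l2_zero [simp]: "(\<lambda>_. 0) \<in> l2"
  by (simp add: l2_def)

lemma l2_mono:
  assumes "\<eta> \<in> l2" "\<And>x. cmod (\<xi> x) \<le> cmod (\<eta> x)"
  shows "\<xi> \<in> l2"
  using assms unfolding mem_l2_iff
  by (auto intro: summable_on_comparison_test power_mono)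

lemma l2_scale: "\<xi> \<in> l2 \<Longrightarrow> (\<lambda>x. c * \<xi> x) \<in> l2"
  unfolding mem_l2_iff by (simp add: norm_mult power_mult_distrib summable_on_cmult_right)

lemma norm_add_sq_le: "(cmod (a + b))\<^sup>2 \<le> 2 * (cmod a)\<^sup>2 + 2 * (cmod b)\<^sup>2"
proof -
  have "(cmod (a + b))\<^sup>2 \<le> (cmod a + cmod b)\<^sup>2"
    by (simp add: power_mono norm_triangle_ineq)
  also have "\<dots> \<le> 2 * (cmod a)\<^sup>2 + 2 * (cmod b)\<^sup>2"
    using sum_squares_ge_zero[of "cmod a - cmod b" 0] by (simp add: power2_eq_square algebra_simps)
  finally show ?thesis .
qed

lemma l2_add: "\<xi> \<in> l2 \<Longrightarrow> \<eta> \<in> l2 \<Longrightarrow> (\<lambda>x. \<xi> x + \<eta> x) \<in> l2"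
  unfolding mem_l2_iff
  by (rule summable_on_comparison_test[where f = "\<lambda>x. 2 * (cmod (\<xi> x))\<^sup>2 + 2 * (cmod (\<eta> x))\<^sup>2"])
     (auto intro!: summable_on_add summable_on_cmult_right norm_add_sq_le)

lemma l2_lin: "\<xi> \<in> l2 \<Longrightarrow> \<eta> \<in> l2 \<Longrightarrow> (\<lambda>x. a * \<xi> x + b * \<eta> x) \<in> l2"
  by (intro l2_add l2_scale)

lemma l2_sum: "finite F \<Longrightarrow> (\<And>i. i \<in> F \<Longrightarrow> f i \<in> l2) \<Longrightarrow> (\<lambda>x. \<Sum>i\<in>F. f i x) \<in> l2"
  by (induction F rule: finite_induct) (auto intro!: l2_add)

lemma l2_finite_support: "finite {x. \<xi> x \<noteq> 0} \<Longrightarrow> \<xi> \<in> l2"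
proof -
  assume "finite {x. \<xi> x \<noteq> 0}"
  then have "(\<lambda>x. (cmod (\<xi> x))\<^sup>2) summable_on {x. \<xi> x \<noteq> 0}"
    by simp
  then show ?thesis
    unfolding mem_l2_iff by (rule summable_on_cong_neutral[THEN iffD1, rotated -1]) auto
qed

lemma infsum_finite_support:
  fixes f :: "'a \<Rightarrow> 'b::{comm_monoid_add, t2_space}"
  assumes "finite S" "\<And>x. x \<notin> S \<Longrightarrow> f x = 0"
  shows "infsum f UNIV = sum f S"
proof -
  have "infsum f UNIV = infsum f S"
    by (rule infsum_cong_neutral) (use assms in auto)
  then show ?thesis
    using assms(1) by simp
qed

definition sqnorm :: "vect \<Rightarrow> real" where
  "sqnorm \<xi> = infsum (\<lambda>x. (cmod (\<xi> x))\<^sup>2) UNIV"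

lemma sqnorm_nonneg: "sqnorm \<xi> \<ge> 0"
  unfolding sqnorm_def by (rule infsum_nonneg) simp

lemma lnorm_eq_sqrt_sqnorm: "lnorm \<xi> = sqrt (sqnorm \<xi>)"
  by (simp add: lnorm_def sqnorm_def)

lemma lnorm_nonneg: "lnorm \<xi> \<ge> 0"
  by (simp add: lnorm_eq_sqrt_sqnorm sqnorm_nonneg)

lemma sqnorm_finite_support:
  "finite S \<Longrightarrow> (\<And>x. x \<notin> S \<Longrightarrow> \<xi> x = 0) \<Longrightarrow> sqnorm \<xi> = (\<Sum>x\<in>S. (cmod (\<xi> x))\<^sup>2)"
  unfolding sqnorm_def by (rule infsum_finite_support) auto

lemma sum_le_sqnorm: "\<xi> \<in> l2 \<Longrightarrow> finite F \<Longrightarrow> (\<Sum>x\<in>F. (cmod (\<xi> x))\<^sup>2) \<le> sqnorm \<xi>"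
  unfolding sqnorm_def by (rule finite_sum_le_infsum) (auto simp: mem_l2_iff)

lemma sqnorm_mono:
  assumes "\<eta> \<in> l2" "\<And>x. cmod (\<xi> x) \<le> cmod (\<eta> x)"
  shows "sqnorm \<xi> \<le> sqnorm \<eta>"
  unfolding sqnorm_def
  by (rule infsum_mono) (use assms l2_mono[OF assms] in \<open>auto simp: mem_l2_iff intro: power_mono\<close>)

lemma sqnorm_add_le:
  assumes "\<xi> \<in> l2" "\<eta> \<in> l2"
  shows "sqnorm (\<lambda>x. \<xi> x + \<eta> x) \<le> 2 * sqnorm \<xi> + 2 * sqnorm \<eta>"
proof -
  have s: "(\<lambda>x. 2 * (cmod (\<xi> x))\<^sup>2) summable_on UNIV" "(\<lambda>x. 2 * (cmod (\<eta> x))\<^sup>2) summable_on UNIV"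
    using assms by (auto simp: mem_l2_iff intro: summable_on_cmult_right)
  have "sqnorm (\<lambda>x. \<xi> x + \<eta> x) \<le> infsum (\<lambda>x. 2 * (cmod (\<xi> x))\<^sup>2 + 2 * (cmod (\<eta> x))\<^sup>2) UNIV"
    unfolding sqnorm_def
    by (rule infsum_mono) (use l2_add[OF assms] s in \<open>auto simp: mem_l2_iff norm_add_sq_le intro: summable_on_add\<close>)
  also have "\<dots> = 2 * sqnorm \<xi> + 2 * sqnorm \<eta>"
    using assms unfolding sqnorm_def
    by (simp add: infsum_add[OF s] infsum_cmult_right l2_def)
  finally show ?thesis .
qed

lemma lnorm_scale: "lnorm (\<lambda>x. c * \<xi> x) = cmod c * lnorm \<xi>"
proof -
  have "sqnorm (\<lambda>x. c * \<xi> x) = (cmod c)\<^sup>2 * sqnorm \<xi>"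
    unfolding sqnorm_def by (simp add: norm_mult power_mult_distrib infsum_cmult_right')
  then show ?thesis by (simp add: lnorm_eq_sqrt_sqnorm real_sqrt_mult)
qed

lemma finite_sum_norm_mult_le:
  assumes "\<xi> \<in> l2" "\<eta> \<in> l2" "finite F"
  shows "(\<Sum>x\<in>F. cmod (\<xi> x) * cmod (\<eta> x)) \<le> lnorm \<xi> * lnorm \<eta>"
proof -
  have "(\<Sum>x\<in>F. cmod (\<xi> x) * cmod (\<eta> x)) \<le> L2_set (\<lambda>x. cmod (\<xi> x)) F * L2_set (\<lambda>x. cmod (\<eta> x)) F"
    using L2_set_mult_ineq[where f = "\<lambda>x. cmod (\<xi> x)" and g = "\<lambda>x. cmod (\<eta> x)" and A = F] by simp
  also have "\<dots> \<le> lnorm \<xi> * lnorm \<eta>"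
    unfolding L2_set_def lnorm_eq_sqrt_sqnorm
    by (intro mult_mono real_sqrt_le_mono sum_le_sqnorm assms) (auto simp: sqnorm_nonneg sum_nonneg)
  finally show ?thesis .
qed

lemma norm_mult_summable:
  assumes "\<xi> \<in> l2" "\<eta> \<in> l2"
  shows "(\<lambda>x. cmod (\<xi> x) * cmod (\<eta> x)) summable_on UNIV"
  by (rule nonneg_bdd_above_summable_on)
     (auto intro: bdd_aboveI finite_sum_norm_mult_le[OF assms])

lemma inner_summable:
  assumes "\<xi> \<in> l2" "\<eta> \<in> l2"
  shows "(\<lambda>x. cnj (\<xi> x) * \<eta> x) summable_on UNIV"
  by (rule abs_summable_summable) (use norm_mult_summable[OF assms] in \<open>simp add: norm_mult\<close>)

lemma cauchy_schwarz:
  assumes "\<xi> \<in> l2" "\<eta> \<in> l2"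
  shows "cmod (linner \<xi> \<eta>) \<le> lnorm \<xi> * lnorm \<eta>"
proof -
  have "cmod (linner \<xi> \<eta>) \<le> infsum (\<lambda>x. cmod (cnj (\<xi> x) * \<eta> x)) UNIV"
    unfolding linner_def
    by (rule norm_infsum_bound) (use norm_mult_summable[OF assms] in \<open>simp add: norm_mult\<close>)
  also have "\<dots> \<le> lnorm \<xi> * lnorm \<eta>"
    by (rule infsum_le_finite_sums)
       (use norm_mult_summable[OF assms] finite_sum_norm_mult_le[OF assms] in \<open>simp_all add: norm_mult\<close>)
  finally show ?thesis .
qed

lemma linner_commute: "linner \<eta> \<xi> = cnj (linner \<xi> \<eta>)"
  unfolding linner_def infsum_cnj[symmetric] by (simp add: mult.commute)

lemma linner_finite_support:
  "finite S \<Longrightarrow> (\<And>x. x \<notin> S \<Longrightarrow> \<xi> x = 0) \<Longrightarrow> linner \<xi> \<eta> = (\<Sum>x\<in>S. cnj (\<xi> x) * \<eta> x)"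
  unfolding linner_def by (rule infsum_finite_support) auto

lemma linner_lin_left:
  assumes "\<xi> \<in> l2" "\<xi>' \<in> l2" "\<eta> \<in> l2"
  shows "linner (\<lambda>x. a * \<xi> x + b * \<xi>' x) \<eta> = cnj a * linner \<xi> \<eta> + cnj b * linner \<xi>' \<eta>"
proof -
  have s: "(\<lambda>x. cnj a * (cnj (\<xi> x) * \<eta> x)) summable_on UNIV"
    "(\<lambda>x. cnj b * (cnj (\<xi>' x) * \<eta> x)) summable_on UNIV"
    using assms by (auto intro!: summable_on_cmult_right inner_summable)
  have "linner (\<lambda>x. a * \<xi> x + b * \<xi>' x) \<eta>
      = infsum (\<lambda>x. cnj a * (cnj (\<xi> x) * \<eta> x) + cnj b * (cnj (\<xi>' x) * \<eta> x)) UNIV"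
    unfolding linner_def by (simp add: algebra_simps)
  also have "\<dots> = cnj a * linner \<xi> \<eta> + cnj b * linner \<xi>' \<eta>"
    unfolding linner_def infsum_add[OF s]
    by (simp add: infsum_cmult_right inner_summable assms)
  finally show ?thesis .
qed

lemma linner_lin_right:
  assumes "\<xi> \<in> l2" "\<xi>' \<in> l2" "\<eta> \<in> l2"
  shows "linner \<eta> (\<lambda>x. a * \<xi> x + b * \<xi>' x) = a * linner \<eta> \<xi> + b * linner \<eta> \<xi>'"
  by (subst (1 2 3) linner_commute) (simp add: linner_lin_left[OF assms])

lemma linner_add_left:
  "\<xi> \<in> l2 \<Longrightarrow> \<xi>' \<in> l2 \<Longrightarrow> \<eta> \<in> l2 \<Longrightarrow> linner (\<lambda>x. \<xi> x + \<xi>' x) \<eta> = linner \<xi> \<eta> + linner \<xi>' \<eta>"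
  using linner_lin_left[of \<xi> \<xi>' \<eta> 1 1] by simp

lemma linner_sum_left:
  assumes "finite F" "\<And>i. i \<in> F \<Longrightarrow> f i \<in> l2" "\<eta> \<in> l2"
  shows "linner (\<lambda>x. \<Sum>i\<in>F. c i * f i x) \<eta> = (\<Sum>i\<in>F. cnj (c i) * linner (f i) \<eta>)"
  using assms
proof (induction F rule: finite_induct)
  case empty
  then show ?case by (simp add: linner_def)
next
  case (insert a F)
  have "(\<lambda>x. \<Sum>i\<in>F. c i * f i x) \<in> l2"
    using insert by (auto intro!: l2_sum l2_scale)
  then show ?case
    using insert linner_lin_left[of "f a" "\<lambda>x. \<Sum>i\<in>F. c i * f i x" \<eta> "c a" 1] by simp
qed

definition delta :: "grp \<Rightarrow> vect" where
  "delta a = (\<lambda>y. if y = a then 1 else 0)"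

lemma delta_l2 [simp]: "delta a \<in> l2"
  by (rule l2_finite_support) (simp add: delta_def)

lemma linner_delta_left: "linner (delta a) \<eta> = \<eta> a"
  by (subst linner_finite_support[of "{a}"]) (auto simp: delta_def)

lemma finite_support_eq_sum_delta:
  assumes "finite F" "\<And>x. x \<notin> F \<Longrightarrow> \<xi> x = 0"
  shows "\<xi> = (\<lambda>y. \<Sum>x\<in>F. \<xi> x * delta x y)"
proof
  fix y
  show "\<xi> y = (\<Sum>x\<in>F. \<xi> x * delta x y)"
  proof (cases "y \<in> F")
    case True
    then have "(\<Sum>x\<in>F. \<xi> x * delta x y) = (\<Sum>x\<in>{y}. \<xi> x * delta x y)"
      by (intro sum.mono_neutral_right) (auto simp: delta_def assms(1))
    then show ?thesis by (simp add: delta_def)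
  qed (use assms in \<open>auto simp: delta_def intro!: sum.neutral\<close>)
qed

section \<open>Bounded operators and their adjoints\<close>

lemma bop_l2: "bop T \<Longrightarrow> \<xi> \<in> l2 \<Longrightarrow> T \<xi> \<in> l2"
  by (simp add: bop_def)

lemma bop_lin: "bop T \<Longrightarrow> \<xi> \<in> l2 \<Longrightarrow> \<eta> \<in> l2 \<Longrightarrow>
   T (\<lambda>x. a * \<xi> x + b * \<eta> x) = (\<lambda>x. a * T \<xi> x + b * T \<eta> x)"
  by (simp add: bop_def)

lemma bop_outside_l2: "bop T \<Longrightarrow> \<xi> \<notin> l2 \<Longrightarrow> T \<xi> = (\<lambda>_. 0)"
  by (simp add: bop_def)

lemma bop_zero: "bop T \<Longrightarrow> T (\<lambda>_. 0) = (\<lambda>_. 0)"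
  using bop_lin[of T "\<lambda>_. 0" "\<lambda>_. 0" 0 0] by simp

lemma bop_add: "bop T \<Longrightarrow> \<xi> \<in> l2 \<Longrightarrow> \<eta> \<in> l2 \<Longrightarrow> T (\<lambda>x. \<xi> x + \<eta> x) = (\<lambda>x. T \<xi> x + T \<eta> x)"
  using bop_lin[of T \<xi> \<eta> 1 1] by simp

lemma bop_bounded: "bop T \<Longrightarrow> \<exists>C\<ge>0. \<forall>\<xi>\<in>l2. lnorm (T \<xi>) \<le> C * lnorm \<xi>"
proof -
  assume "bop T"
  then obtain C where C: "\<forall>\<xi>\<in>l2. lnorm (T \<xi>) \<le> C * lnorm \<xi>"
    by (auto simp: bop_def)
  have "lnorm (T \<xi>) \<le> max C 0 * lnorm \<xi>" if "\<xi> \<in> l2" for \<xi>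
  proof -
    have "C * lnorm \<xi> \<le> max C 0 * lnorm \<xi>"
      by (intro mult_right_mono) (auto simp: lnorm_nonneg)
    then show ?thesis
      using C that by force
  qed
  then show ?thesis
    by (intro exI[of _ "max C 0"]) auto
qed

lemma bop_sum:
  assumes "bop T" "finite F" "\<And>i. i \<in> F \<Longrightarrow> f i \<in> l2"
  shows "T (\<lambda>x. \<Sum>i\<in>F. c i * f i x) = (\<lambda>x. \<Sum>i\<in>F. c i * T (f i) x)"
  using assms(2,3)
proof (induction F rule: finite_induct)
  case empty
  then show ?case using bop_zero[OF assms(1)] by simp
next
  case (insert a F)
  have "(\<lambda>x. \<Sum>i\<in>F. c i * f i x) \<in> l2"
    using insert by (auto intro!: l2_sum l2_scale)
  then show ?case
    using insert bop_lin[OF assms(1), of "f a" "\<lambda>x. \<Sum>i\<in>F. c i * f i x" "c a" 1] by simp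
qed

lemma bopI:
  assumes "\<And>\<xi>. \<xi> \<in> l2 \<Longrightarrow> T \<xi> \<in> l2"
    "\<And>\<xi> \<eta> a b. \<xi> \<in> l2 \<Longrightarrow> \<eta> \<in> l2 \<Longrightarrow> T (\<lambda>x. a * \<xi> x + b * \<eta> x) = (\<lambda>x. a * T \<xi> x + b * T \<eta> x)"
    "\<And>\<xi>. \<xi> \<in> l2 \<Longrightarrow> lnorm (T \<xi>) \<le> C * lnorm \<xi>"
    "\<And>\<xi>. \<xi> \<notin> l2 \<Longrightarrow> T \<xi> = (\<lambda>_. 0)"
  shows "bop T"
  unfolding bop_def using assms by blast

lemma sqnorm_le_of_bound:
  assumes "\<forall>\<xi>\<in>l2. lnorm (T \<xi>) \<le> C * lnorm \<xi>" "C \<ge> 0" "\<xi> \<in> l2"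
  shows "sqnorm (T \<xi>) \<le> C\<^sup>2 * sqnorm \<xi>"
proof -
  have "(lnorm (T \<xi>))\<^sup>2 \<le> (C * lnorm \<xi>)\<^sup>2"
    using assms by (intro power_mono) (auto simp: lnorm_nonneg)
  then show ?thesis
    by (simp add: lnorm_eq_sqrt_sqnorm sqnorm_nonneg power_mult_distrib)
qed

lemma bop_add_op:
  assumes A: "bop A" and B: "bop B"
  shows "bop (\<lambda>\<xi> x. A \<xi> x + B \<xi> x)"
proof -
  obtain C where C: "\<forall>\<xi>\<in>l2. lnorm (A \<xi>) \<le> C * lnorm \<xi>" "C \<ge> 0"
    using bop_bounded[OF A] by blast
  obtain D where D: "\<forall>\<xi>\<in>l2. lnorm (B \<xi>) \<le> D * lnorm \<xi>" "D \<ge> 0"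
    using bop_bounded[OF B] by blast
  show ?thesis
  proof (rule bopI[where C = "sqrt (2 * C\<^sup>2 + 2 * D\<^sup>2)"])
    fix \<xi> assume \<xi>: "\<xi> \<in> l2"
    show "(\<lambda>x. A \<xi> x + B \<xi> x) \<in> l2"
      using bop_l2[OF A \<xi>] bop_l2[OF B \<xi>] by (rule l2_add)
    have "sqnorm (\<lambda>x. A \<xi> x + B \<xi> x) \<le> 2 * sqnorm (A \<xi>) + 2 * sqnorm (B \<xi>)"
      using bop_l2[OF A \<xi>] bop_l2[OF B \<xi>] by (rule sqnorm_add_le)
    also have "\<dots> \<le> 2 * (C\<^sup>2 * sqnorm \<xi>) + 2 * (D\<^sup>2 * sqnorm \<xi>)"
      using sqnorm_le_of_bound[OF C \<xi>] sqnorm_le_of_bound[OF D \<xi>] by linarith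
    also have "\<dots> = (2 * C\<^sup>2 + 2 * D\<^sup>2) * sqnorm \<xi>"
      by (simp add: algebra_simps)
    finally show "lnorm (\<lambda>x. A \<xi> x + B \<xi> x) \<le> sqrt (2 * C\<^sup>2 + 2 * D\<^sup>2) * lnorm \<xi>"
      unfolding lnorm_eq_sqrt_sqnorm real_sqrt_mult[symmetric] by (rule real_sqrt_le_mono)
  next
    fix \<xi> \<eta> a b assume "\<xi> \<in> l2" "\<eta> \<in> l2"
    then show "(\<lambda>y. A (\<lambda>x. a * \<xi> x + b * \<eta> x) y + B (\<lambda>x. a * \<xi> x + b * \<eta> x) y)
      = (\<lambda>y. a * (A \<xi> y + B \<xi> y) + b * (A \<eta> y + B \<eta> y))"
      using bop_lin[OF A] bop_lin[OF B] by (simp add: algebra_simps)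
  next
    fix \<xi> :: vect assume "\<xi> \<notin> l2"
    then show "(\<lambda>x. A \<xi> x + B \<xi> x) = (\<lambda>_. 0)"
      using A B by (simp add: bop_outside_l2)
  qed
qed

lemma bop_scale_op:
  assumes A: "bop A"
  shows "bop (\<lambda>\<xi> x. c * A \<xi> x)"
proof -
  obtain C where C: "C \<ge> 0" "\<forall>\<xi>\<in>l2. lnorm (A \<xi>) \<le> C * lnorm \<xi>"
    using bop_bounded[OF A] by blast
  have "lnorm (\<lambda>x. c * A \<xi> x) \<le> (cmod c * C) * lnorm \<xi>" if "\<xi> \<in> l2" for \<xi>
    using C that by (simp add: lnorm_scale mult.assoc mult_left_mono)
  moreover have "(\<lambda>y. c * A (\<lambda>x. a * \<xi> x + b * \<eta> x) y) = (\<lambda>y. a * (c * A \<xi> y) + b * (c * A \<eta> y))"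
    if "\<xi> \<in> l2" "\<eta> \<in> l2" for \<xi> \<eta> a b
    using bop_lin[OF A that, of a b] by (simp add: algebra_simps)
  ultimately show ?thesis
    using A by (intro bopI[where C = "cmod c * C"]) (simp_all add: l2_scale bop_l2 bop_outside_l2)
qed

lemma bop_sum_op:
  assumes "finite F" "\<And>i. i \<in> F \<Longrightarrow> bop (T i)"
  shows "bop (\<lambda>\<xi> x. \<Sum>i\<in>F. c i * T i \<xi> x)"
  using assms
proof (induction F rule: finite_induct)
  case empty
  show ?case
    by (rule bopI[where C = 0]) (auto simp: lnorm_eq_sqrt_sqnorm sqnorm_def)
next
  case (insert a F)
  then show ?case
    using bop_add_op[OF bop_scale_op[of "T a" "c a"] insert.IH] by simp
qed

lemma bop_comp:
  assumes A: "bop A" and B: "bop B"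
  shows "bop (A \<circ> B)"
proof -
  obtain C where C: "C \<ge> 0" "\<forall>\<xi>\<in>l2. lnorm (A \<xi>) \<le> C * lnorm \<xi>"
    using bop_bounded[OF A] by blast
  obtain D where D: "D \<ge> 0" "\<forall>\<xi>\<in>l2. lnorm (B \<xi>) \<le> D * lnorm \<xi>"
    using bop_bounded[OF B] by blast
  have "lnorm (A (B \<xi>)) \<le> (C * D) * lnorm \<xi>" if "\<xi> \<in> l2" for \<xi>
  proof -
    have "lnorm (A (B \<xi>)) \<le> C * lnorm (B \<xi>)"
      using C bop_l2[OF B that] by blast
    also have "\<dots> \<le> C * (D * lnorm \<xi>)"
      using C D that by (intro mult_left_mono) auto
    finally show ?thesis by (simp add: mult.assoc)
  qed
  then show ?thesis
    using A B by (intro bopI[where C = "C * D"]) (simp_all add: bop_l2 bop_lin bop_outside_l2 bop_zero)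
qed

(* Operators vanish outside l2, so the unit for composition of bounded operators is the
  projection onto l2 rather than the identity function. *)

definition idop :: oper where
  "idop \<xi> = (if \<xi> \<in> l2 then \<xi> else (\<lambda>_. 0))"

lemma comp_idop_right: "bop T \<Longrightarrow> T \<circ> idop = T"
  by (rule ext) (auto simp: idop_def bop_outside_l2 bop_zero)

lemma comp_idop_left:
  assumes "bop T"
  shows "idop \<circ> T = T"
proof
  fix \<xi>
  show "(idop \<circ> T) \<xi> = T \<xi>"
    using assms by (cases "\<xi> \<in> l2") (simp_all add: idop_def bop_l2 bop_outside_l2)
qed

(* adj is defined by a description; the adjoint exists because of the explicit formula
  (adj T eta)(x) = <T delta_x, eta>. *)

definition coord_adj :: "oper \<Rightarrow> oper" where
  "coord_adj T \<eta> = (if \<eta> \<in> l2 then (\<lambda>x. linner (T (delta x)) \<eta>) else (\<lambda>_. 0))"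

lemma le_sq_of_le_sqrt_mult:
  fixes P B :: real
  assumes "P \<ge> 0" "P \<le> sqrt P * B"
  shows "P \<le> B\<^sup>2"
proof (cases "P = 0")
  case False
  then have "sqrt P > 0"
    using assms(1) by simp
  moreover have "sqrt P * sqrt P \<le> sqrt P * B"
    using assms by simp
  ultimately have "sqrt P \<le> B"
    by (metis mult_le_cancel_left_pos)
  then show ?thesis
    using assms(1) power_mono[of "sqrt P" B 2] by simp
qed (use assms in auto)

lemma linner_bop_finite_support:
  assumes T: "bop T" and \<eta>: "\<eta> \<in> l2" and F: "finite F" and \<xi>: "\<And>x. x \<notin> F \<Longrightarrow> \<xi> x = 0"
  shows "linner (T \<xi>) \<eta> = (\<Sum>x\<in>F. cnj (\<xi> x) * linner (T (delta x)) \<eta>)"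
proof -
  have "T \<xi> = T (\<lambda>y. \<Sum>x\<in>F. \<xi> x * delta x y)"
    by (rule arg_cong[where f = T], rule finite_support_eq_sum_delta[OF F \<xi>])
  also have "\<dots> = (\<lambda>y. \<Sum>x\<in>F. \<xi> x * T (delta x) y)"
    by (rule bop_sum[OF T F]) simp
  finally show ?thesis
    using linner_sum_left[OF F, of "\<lambda>x. T (delta x)" \<eta> \<xi>] T \<eta> by (simp add: bop_l2)
qed

lemma coord_adj_finite_sum_le:
  assumes T: "bop T" and C: "\<forall>\<xi>\<in>l2. lnorm (T \<xi>) \<le> C * lnorm \<xi>" "C \<ge> 0"
    and \<eta>: "\<eta> \<in> l2" and F: "finite F"
  shows "(\<Sum>x\<in>F. (cmod (coord_adj T \<eta> x))\<^sup>2) \<le> (C * lnorm \<eta>)\<^sup>2"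
proof -
  define S where "S = coord_adj T \<eta>"
  define \<zeta> where "\<zeta> = (\<lambda>y. if y \<in> F then S y else 0)"
  define P where "P = (\<Sum>x\<in>F. (cmod (S x))\<^sup>2)"
  have \<zeta>: "\<zeta> \<in> l2"
    by (rule l2_finite_support) (rule finite_subset[OF _ F], auto simp: \<zeta>_def)
  have "P \<ge> 0"
    by (simp add: P_def sum_nonneg)
  have "linner (T \<zeta>) \<eta> = (\<Sum>x\<in>F. cnj (S x) * S x)"
    using \<eta> by (subst linner_bop_finite_support[OF T \<eta> F]) (auto simp: \<zeta>_def S_def coord_adj_def)
  also have "\<dots> = of_real P"
    unfolding P_def of_real_sum by (rule sum.cong[OF refl]) (use complex_norm_square in \<open>simp add: mult.commute\<close>)
  finally have "P = cmod (linner (T \<zeta>) \<eta>)"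
    using \<open>P \<ge> 0\<close> by simp
  also have "\<dots> \<le> lnorm (T \<zeta>) * lnorm \<eta>"
    by (rule cauchy_schwarz[OF bop_l2[OF T \<zeta>] \<eta>])
  also have "\<dots> \<le> C * lnorm \<zeta> * lnorm \<eta>"
    using C \<zeta> by (intro mult_right_mono) (auto simp: lnorm_nonneg)
  also have "lnorm \<zeta> = sqrt P"
    unfolding lnorm_eq_sqrt_sqnorm P_def by (subst sqnorm_finite_support[OF F]) (auto simp: \<zeta>_def)
  finally have "P \<le> (C * lnorm \<eta>)\<^sup>2"
    using le_sq_of_le_sqrt_mult[OF \<open>P \<ge> 0\<close>, of "C * lnorm \<eta>"] by (simp add: algebra_simps)
  then show ?thesis
    by (simp add: P_def S_def)
qed

lemma coord_adj_l2_bounded: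
  assumes T: "bop T" and C: "\<forall>\<xi>\<in>l2. lnorm (T \<xi>) \<le> C * lnorm \<xi>" "C \<ge> 0" and \<eta>: "\<eta> \<in> l2"
  shows "coord_adj T \<eta> \<in> l2" "lnorm (coord_adj T \<eta>) \<le> C * lnorm \<eta>"
proof -
  have sum: "(\<lambda>x. (cmod (coord_adj T \<eta> x))\<^sup>2) summable_on UNIV"
    by (rule nonneg_bdd_above_summable_on)
       (auto intro: bdd_aboveI coord_adj_finite_sum_le[OF T C \<eta>])
  then show "coord_adj T \<eta> \<in> l2"
    by (simp add: mem_l2_iff)
  have "sqnorm (coord_adj T \<eta>) \<le> (C * lnorm \<eta>)\<^sup>2"
    unfolding sqnorm_def by (rule infsum_le_finite_sums[OF sum coord_adj_finite_sum_le[OF T C \<eta>]])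
  then show "lnorm (coord_adj T \<eta>) \<le> C * lnorm \<eta>"
    using C(2) lnorm_nonneg[of \<eta>] by (simp add: lnorm_eq_sqrt_sqnorm real_le_lsqrt)
qed

lemma l2_tail_small:
  assumes "\<xi> \<in> l2" "e > 0"
  shows "\<exists>F. finite F \<and> sqnorm (\<lambda>x. if x \<in> F then 0 else \<xi> x) \<le> e"
proof -
  have sum: "(\<lambda>x. (cmod (\<xi> x))\<^sup>2) summable_on UNIV"
    using assms by (simp add: mem_l2_iff)
  obtain F where F: "finite F" "dist (\<Sum>x\<in>F. (cmod (\<xi> x))\<^sup>2) (sqnorm \<xi>) \<le> e"
    using infsum_finite_approximation[OF sum assms(2)] unfolding sqnorm_def by blast
  define \<rho> where "\<rho> = (\<lambda>x. if x \<in> F then 0 else \<xi> x)"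
  have s: "(\<lambda>x. (cmod (if x \<in> F then \<xi> x else 0))\<^sup>2) summable_on UNIV"
    "(\<lambda>x. (cmod (\<rho> x))\<^sup>2) summable_on UNIV"
    unfolding \<rho>_def by (rule l2_mono[OF assms(1), unfolded mem_l2_iff], simp)+
  have "sqnorm \<xi> = infsum (\<lambda>x. (cmod (if x \<in> F then \<xi> x else 0))\<^sup>2 + (cmod (\<rho> x))\<^sup>2) UNIV"
    unfolding sqnorm_def by (rule infsum_cong) (simp add: \<rho>_def)
  also have "\<dots> = (\<Sum>x\<in>F. (cmod (\<xi> x))\<^sup>2) + sqnorm \<rho>"
    unfolding infsum_add[OF s] sqnorm_def
    by (subst infsum_finite_support[OF F(1)]) auto
  finally show ?thesis
    using F by (intro exI[of _ F]) (auto simp: \<rho>_def dist_real_def)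
qed

lemma linner_defect_le:
  assumes T: "bop T" "\<forall>\<xi>\<in>l2. lnorm (T \<xi>) \<le> C * lnorm \<xi>" and "\<rho> \<in> l2" "\<eta> \<in> l2" "S \<in> l2"
  shows "cmod (linner (T \<rho>) \<eta> - linner \<rho> S) \<le> lnorm \<rho> * (C * lnorm \<eta> + lnorm S)"
proof -
  have "cmod (linner (T \<rho>) \<eta> - linner \<rho> S) \<le> cmod (linner (T \<rho>) \<eta>) + cmod (linner \<rho> S)"
    by (rule norm_triangle_ineq4)
  also have "\<dots> \<le> lnorm (T \<rho>) * lnorm \<eta> + lnorm \<rho> * lnorm S"
    using bop_l2[OF T(1)] assms(3-5) by (intro add_mono cauchy_schwarz)
  also have "\<dots> \<le> lnorm \<rho> * (C * lnorm \<eta> + lnorm S)"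
    using T(2) assms(3) mult_right_mono[of "lnorm (T \<rho>)" "C * lnorm \<rho>" "lnorm \<eta>"]
    by (auto simp: algebra_simps lnorm_nonneg)
  finally show ?thesis .
qed

lemma coord_adj_linner:
  assumes T: "bop T" and \<eta>: "\<eta> \<in> l2" and \<xi>: "\<xi> \<in> l2"
  shows "linner (T \<xi>) \<eta> = linner \<xi> (coord_adj T \<eta>)"
proof -
  obtain C where C: "C \<ge> 0" "\<forall>\<xi>\<in>l2. lnorm (T \<xi>) \<le> C * lnorm \<xi>"
    using bop_bounded[OF T] by blast
  define S where "S = coord_adj T \<eta>"
  have S: "S \<in> l2"
    unfolding S_def by (rule coord_adj_l2_bounded[OF T C(2,1) \<eta>])
  define K where "K = C * lnorm \<eta> + lnorm S"
  have "K \<ge> 0"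
    using C by (simp add: K_def lnorm_nonneg)
  (* Split xi into a finitely supported part, where the identity holds by linearity,
    and a tail of arbitrarily small norm. *)
  have "cmod (linner (T \<xi>) \<eta> - linner \<xi> S) \<le> 0 + e" if "e > 0" for e
  proof -
    obtain F where F: "finite F" "sqnorm (\<lambda>x. if x \<in> F then 0 else \<xi> x) \<le> (e / (K + 1))\<^sup>2"
      using l2_tail_small[OF \<xi>, of "(e / (K + 1))\<^sup>2"] \<open>e > 0\<close> \<open>K \<ge> 0\<close> by auto
    define \<phi> where "\<phi> = (\<lambda>x. if x \<in> F then \<xi> x else 0)"
    define \<rho> where "\<rho> = (\<lambda>x. if x \<in> F then 0 else \<xi> x)"
    have \<phi>: "\<phi> \<in> l2" and \<rho>: "\<rho> \<in> l2"
      unfolding \<phi>_def \<rho>_def by (rule l2_mono[OF \<xi>], simp)+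
    have "\<xi> = (\<lambda>x. \<phi> x + \<rho> x)"
      by (auto simp: \<phi>_def \<rho>_def)
    then have "linner (T \<xi>) \<eta> - linner \<xi> S = (linner (T \<phi>) \<eta> - linner \<phi> S) + (linner (T \<rho>) \<eta> - linner \<rho> S)"
      using T \<phi> \<rho> \<eta> S by (simp add: bop_add bop_l2 linner_add_left)
    also have "linner (T \<phi>) \<eta> = linner \<phi> S"
      using \<eta> by (simp add: linner_bop_finite_support[OF T \<eta> F(1)] linner_finite_support[OF F(1)]
          \<phi>_def S_def coord_adj_def)
    finally have "cmod (linner (T \<xi>) \<eta> - linner \<xi> S) \<le> lnorm \<rho> * K"
      using linner_defect_le[OF T C(2) \<rho> \<eta> S] by (simp add: K_def)
    also have "\<dots> \<le> e / (K + 1) * K"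
      using real_sqrt_le_mono[OF F(2)] \<open>K \<ge> 0\<close> \<open>e > 0\<close>
      by (intro mult_right_mono) (simp_all add: lnorm_eq_sqrt_sqnorm \<rho>_def)
    also have "\<dots> \<le> 0 + e"
      using \<open>K \<ge> 0\<close> \<open>e > 0\<close> by (simp add: field_simps)
    finally show ?thesis .
  qed
  then show ?thesis
    using field_le_epsilon[of "cmod (linner (T \<xi>) \<eta> - linner \<xi> S)" 0] by (simp add: S_def)
qed

lemma bop_coord_adj: "bop T \<Longrightarrow> bop (coord_adj T)"
proof -
  assume T: "bop T"
  obtain C where C: "C \<ge> 0" "\<forall>\<xi>\<in>l2. lnorm (T \<xi>) \<le> C * lnorm \<xi>"
    using bop_bounded[OF T] by blast
  show ?thesis
    using coord_adj_l2_bounded[OF T C(2,1)]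
    by (intro bopI[where C = C]) (auto simp: coord_adj_def l2_lin linner_lin_right bop_l2[OF T])
qed

lemma adj_eqI:
  assumes "bop T" "bop S" "\<And>\<xi> \<eta>. \<xi> \<in> l2 \<Longrightarrow> \<eta> \<in> l2 \<Longrightarrow> linner (T \<xi>) \<eta> = linner \<xi> (S \<eta>)"
  shows "adj T = S"
  unfolding adj_def
proof (rule the_equality)
  fix S' assume S': "bop S' \<and> (\<forall>\<xi>\<in>l2. \<forall>\<eta>\<in>l2. linner (T \<xi>) \<eta> = linner \<xi> (S' \<eta>))"
  show "S' = S"
  proof
    fix \<eta>
    show "S' \<eta> = S \<eta>"
    proof (cases "\<eta> \<in> l2")
      case True
      then have "linner (delta x) (S' \<eta>) = linner (delta x) (S \<eta>)" for x
        using assms(3) S' by simp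
      then show ?thesis
        by (simp add: linner_delta_left fun_eq_iff)
    qed (use assms S' in \<open>simp add: bop_outside_l2\<close>)
  qed
qed (use assms in auto)

lemma adj_eq_coord_adj: "bop T \<Longrightarrow> adj T = coord_adj T"
  by (rule adj_eqI) (auto simp: bop_coord_adj coord_adj_linner)

lemma bop_adj: "bop T \<Longrightarrow> bop (adj T)"
  by (simp add: adj_eq_coord_adj bop_coord_adj)

lemma adj_linner: "bop T \<Longrightarrow> \<xi> \<in> l2 \<Longrightarrow> \<eta> \<in> l2 \<Longrightarrow> linner (T \<xi>) \<eta> = linner \<xi> (adj T \<eta>)"
  by (simp add: adj_eq_coord_adj coord_adj_linner)

lemma adj_adj:
  assumes T: "bop T"
  shows "adj (adj T) = T"
proof (rule adj_eqI)
  fix \<xi> \<eta> assume \<xi>: "\<xi> \<in> l2" and \<eta>: "\<eta> \<in> l2"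
  have "linner (adj T \<xi>) \<eta> = cnj (linner \<eta> (adj T \<xi>))"
    by (rule linner_commute)
  also have "linner \<eta> (adj T \<xi>) = linner (T \<eta>) \<xi>"
    by (rule adj_linner[OF T \<eta> \<xi>, symmetric])
  also have "cnj (linner (T \<eta>) \<xi>) = linner \<xi> (T \<eta>)"
    by (rule linner_commute[symmetric])
  finally show "linner (adj T \<xi>) \<eta> = linner \<xi> (T \<eta>)" .
qed (use T bop_adj in auto)

lemma adj_comp:
  assumes A: "bop A" and B: "bop B"
  shows "adj (A \<circ> B) = adj B \<circ> adj A"
proof (rule adj_eqI)
  fix \<xi> \<eta> assume \<xi>: "\<xi> \<in> l2" and \<eta>: "\<eta> \<in> l2"
  have "linner (A (B \<xi>)) \<eta> = linner (B \<xi>) (adj A \<eta>)"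
    by (rule adj_linner[OF A bop_l2[OF B \<xi>] \<eta>])
  also have "\<dots> = linner \<xi> (adj B (adj A \<eta>))"
    by (rule adj_linner[OF B \<xi> bop_l2[OF bop_adj[OF A] \<eta>]])
  finally show "linner ((A \<circ> B) \<xi>) \<eta> = linner \<xi> ((adj B \<circ> adj A) \<eta>)"
    by simp
qed (use A B in \<open>simp_all add: bop_comp bop_adj\<close>)

section \<open>Commutants and generated von Neumann algebras\<close>

lemma comm_antimono: "X \<subseteq> Y \<Longrightarrow> comm Y \<subseteq> comm X"
  by (auto simp: comm_def)

lemma comm_subset_bop: "comm X \<subseteq> Collect bop"
  by (auto simp: comm_def)

lemma subset_comm_comm: "X \<subseteq> Collect bop \<Longrightarrow> X \<subseteq> comm (comm X)"
  by (auto simp: comm_def)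

lemma comm_comm_comm: "X \<subseteq> Collect bop \<Longrightarrow> comm (comm (comm X)) = comm X"
  by (intro antisym comm_antimono subset_comm_comm comm_subset_bop)

lemma commD: "T \<in> comm X \<Longrightarrow> A \<in> X \<Longrightarrow> T \<circ> A = A \<circ> T"
  by (simp add: comm_def)

lemma commI: "bop T \<Longrightarrow> (\<And>A. A \<in> X \<Longrightarrow> T \<circ> A = A \<circ> T) \<Longrightarrow> T \<in> comm X"
  by (simp add: comm_def)

lemma adj_mem_comm:
  assumes X: "X \<subseteq> Collect bop" "\<And>A. A \<in> X \<Longrightarrow> adj A \<in> X" and T: "T \<in> comm X"
  shows "adj T \<in> comm X"
proof (rule commI)
  have T_bop: "bop T"
    using T comm_subset_bop by blast
  then show "bop (adj T)"
    by (rule bop_adj)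
  fix A assume "A \<in> X"
  then have "bop A" "T \<circ> adj A = adj A \<circ> T"
    using X commD[OF T] by auto
  then show "adj T \<circ> A = A \<circ> adj T"
    using adj_comp[OF bop_adj[OF \<open>bop A\<close>] T_bop] adj_comp[OF T_bop bop_adj[OF \<open>bop A\<close>]]
    by (simp add: adj_adj)
qed

lemma comp_mem_comm:
  assumes "A \<in> comm X" "B \<in> comm X"
  shows "A \<circ> B \<in> comm X"
proof (rule commI)
  show "bop (A \<circ> B)"
    using assms comm_subset_bop by (blast intro: bop_comp)
  fix C assume "C \<in> X"
  then have "A \<circ> C = C \<circ> A" "B \<circ> C = C \<circ> B"
    using assms commD by blast+
  then have "A \<circ> (B \<circ> C) = (C \<circ> A) \<circ> B"
    by (simp add: comp_assoc[symmetric])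
  then show "A \<circ> B \<circ> C = C \<circ> (A \<circ> B)"
    by (simp add: comp_assoc)
qed

lemma sum_mem_comm:
  assumes X: "X \<subseteq> Collect bop" and F: "finite F" and T: "\<And>i. i \<in> F \<Longrightarrow> T i \<in> comm X"
  shows "(\<lambda>\<xi> x. \<Sum>i\<in>F. c i * T i \<xi> x) \<in> comm X"
proof (rule commI)
  have T_bop: "\<And>i. i \<in> F \<Longrightarrow> bop (T i)"
    using T comm_subset_bop by blast
  then show "bop (\<lambda>\<xi> x. \<Sum>i\<in>F. c i * T i \<xi> x)"
    by (rule bop_sum_op[OF F])
  fix A assume A: "A \<in> X"
  then have "bop A"
    using X by blast
  have "A (\<lambda>x. \<Sum>i\<in>F. c i * T i \<xi> x) = (\<lambda>x. \<Sum>i\<in>F. c i * T i (A \<xi>) x)" for \<xi>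
  proof (cases "\<xi> \<in> l2")
    case True
    have "A (\<lambda>x. \<Sum>i\<in>F. c i * T i \<xi> x) = (\<lambda>x. \<Sum>i\<in>F. c i * A (T i \<xi>) x)"
      using True T_bop by (intro bop_sum[OF \<open>bop A\<close> F]) (rule bop_l2)
    also have "\<dots> = (\<lambda>x. \<Sum>i\<in>F. c i * T i (A \<xi>) x)"
      using fun_cong[OF commD[OF T A]] by (intro ext sum.cong refl) simp
    finally show ?thesis .
  qed (use T_bop \<open>bop A\<close> in \<open>simp add: bop_outside_l2 bop_zero\<close>)
  then show "(\<lambda>\<xi> x. \<Sum>i\<in>F. c i * T i \<xi> x) \<circ> A = A \<circ> (\<lambda>\<xi> x. \<Sum>i\<in>F. c i * T i \<xi> x)"
    by (simp add: fun_eq_iff)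
qed

lemma vNgen_subset_bop: "vNgen S \<subseteq> Collect bop"
  by (simp add: vNgen_def comm_subset_bop)

lemma adj_closure_subset_bop: "S \<subseteq> Collect bop \<Longrightarrow> S \<union> adj ` S \<subseteq> Collect bop"
  by (auto simp: bop_adj)

lemma is_vNa_vNgen:
  assumes S: "S \<subseteq> Collect bop"
  shows "is_vNa (vNgen S)"
  unfolding is_vNa_def
proof (intro conjI ballI)
  have "adj A \<in> comm (S \<union> adj ` S)" if "A \<in> comm (S \<union> adj ` S)" for A
    using adj_closure_subset_bop[OF S] S that by (intro adj_mem_comm) (auto simp: adj_adj)
  then show "adj T \<in> vNgen S" if "T \<in> vNgen S" for T
    using that unfolding vNgen_def by (intro adj_mem_comm[OF comm_subset_bop])
qed (simp_all add: vNgen_subset_bop vNgen_def comm_comm_comm comm_subset_bop)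

lemma vNgen_mono: "S \<subseteq> S' \<Longrightarrow> vNgen S \<subseteq> vNgen S'"
  unfolding vNgen_def by (intro comm_antimono) auto

lemma subset_vNgen: "S \<subseteq> Collect bop \<Longrightarrow> S \<subseteq> vNgen S"
  unfolding vNgen_def using subset_comm_comm[OF adj_closure_subset_bop] by blast

lemma vNgen_least:
  assumes "is_vNa M" "S \<subseteq> M"
  shows "vNgen S \<subseteq> M"
proof -
  have "S \<union> adj ` S \<subseteq> M"
    using assms by (auto simp: is_vNa_def)
  then have "vNgen S \<subseteq> comm (comm M)"
    unfolding vNgen_def by (intro comm_antimono)
  then show ?thesis
    using assms(1) by (simp add: is_vNa_def)
qed

lemma comm_vNgen: "S \<subseteq> Collect bop \<Longrightarrow> comm (vNgen S) = comm (S \<union> adj ` S)"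
  unfolding vNgen_def by (rule comm_comm_comm[OF adj_closure_subset_bop])

lemma is_vNa_comp: "is_vNa M \<Longrightarrow> A \<in> M \<Longrightarrow> B \<in> M \<Longrightarrow> A \<circ> B \<in> M"
  using comp_mem_comm[of A "comm M" B] by (simp add: is_vNa_def)

lemma is_vNa_sum:
  "is_vNa M \<Longrightarrow> finite F \<Longrightarrow> (\<And>i. i \<in> F \<Longrightarrow> T i \<in> M) \<Longrightarrow> (\<lambda>\<xi> x. \<Sum>i\<in>F. c i * T i \<xi> x) \<in> M"
  using sum_mem_comm[OF comm_subset_bop[of M], of F T c] by (simp add: is_vNa_def)

section \<open>Finitary matrices over \<open>F\<^sub>2\<close>\<close>

(* Keep sums and products over F_2 in ring form; by default the simplifier turns them into
  xor and conjunction. *)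
declare add_bit_eq_xor [simp del] mult_bit_eq_and [simp del]

lemma bit_add_self [simp]: "(x::bit) + x = 0"
  by (cases x) simp_all

lemma bit_uminus [simp]: "- (x::bit) = x"
  by (cases x) simp_all

lemma bit_diff_eq_add: "(x::bit) - y = x + y"
  by (simp add: diff_conv_add_uminus)

definition idm_beyond :: "nat \<Rightarrow> mat2 \<Rightarrow> bool" where
  "idm_beyond n A \<longleftrightarrow> (\<forall>i j. n \<le> i \<or> n \<le> j \<longrightarrow> A i j = idm i j)"

definition zero_beyond :: "nat \<Rightarrow> vec2 \<Rightarrow> bool" where
  "zero_beyond n v \<longleftrightarrow> (\<forall>j\<ge>n. v j = 0)"

lemma eventually_idm_beyond:
  assumes "finitary A"
  shows "eventually (\<lambda>n. idm_beyond n A) sequentially"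
proof -
  let ?D = "{(i, j). A i j \<noteq> idm i j}"
  have "finite (fst ` ?D \<union> snd ` ?D)"
    using assms by (simp add: finitary_def)
  then obtain N where N: "\<forall>x \<in> fst ` ?D \<union> snd ` ?D. x < N"
    using finite_nat_set_iff_bounded by blast
  have "idm_beyond n A" if "N \<le> n" for n
    unfolding idm_beyond_def
  proof (intro allI impI)
    fix i j assume ij: "n \<le> i \<or> n \<le> j"
    show "A i j = idm i j"
    proof (rule ccontr)
      assume "A i j \<noteq> idm i j"
      then have "i \<in> fst ` ?D" "j \<in> snd ` ?D"
        by force+
      then have "i < N" "j < N"
        using N by blast+
      then show False
        using ij that by linarith
    qed
  qed
  then show ?thesis
    by (auto simp: eventually_sequentially)
qed

lemma eventually_zero_beyond:
  assumes "fsupp v"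
  shows "eventually (\<lambda>n. zero_beyond n v) sequentially"
proof -
  obtain N where "\<forall>i\<in>{i. v i \<noteq> 0}. i < N"
    using assms finite_nat_set_iff_bounded by (auto simp: fsupp_def)
  then have "zero_beyond n v" if "N \<le> n" for n
    using that by (auto simp: zero_beyond_def not_le[symmetric])
  then show ?thesis
    by (auto simp: eventually_sequentially)
qed

lemma finitary_iff_idm_beyond: "finitary A \<longleftrightarrow> (\<exists>n. idm_beyond n A)"
proof
  assume "\<exists>n. idm_beyond n A"
  then obtain n where "idm_beyond n A" ..
  then have "{(i, j). A i j \<noteq> idm i j} \<subseteq> {..<n} \<times> {..<n}"
    by (auto simp: idm_beyond_def not_le[symmetric])
  then show "finitary A"
    unfolding finitary_def by (rule finite_subset) simp
qed (use eventually_happens'[OF sequentially_bot eventually_idm_beyond] in blast)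

lemma zero_beyond_finite: "finite {v. zero_beyond n v}"
proof -
  have "{v. zero_beyond n v} \<subseteq> (\<lambda>S j. if j \<in> S then 1 else 0) ` Pow {..<n}"
  proof
    fix v assume v: "v \<in> {v. zero_beyond n v}"
    have "v = (\<lambda>j. if j \<in> {j. v j \<noteq> 0} then 1 else 0)"
      by (auto simp: fun_eq_iff bit_not_zero_iff)
    moreover have "{j. v j \<noteq> 0} \<in> Pow {..<n}"
      using v by (auto simp: zero_beyond_def not_le[symmetric])
    ultimately show "v \<in> (\<lambda>S j. if j \<in> S then 1 else 0) ` Pow {..<n}"
      by blast
  qed
  then show ?thesis
    by (rule finite_subset) simp
qed

lemma mm_eq_sum_lessThan:
  assumes "idm_beyond n A" "n \<le> m" "i < m"
  shows "mm A B i k = (\<Sum>j<m. A i j * B j k)"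
  unfolding mm_def
proof (rule sum.mono_neutral_left)
  show "{j. A i j \<noteq> 0} \<subseteq> {..<m}"
  proof
    fix j assume j: "j \<in> {j. A i j \<noteq> 0}"
    show "j \<in> {..<m}"
    proof (rule ccontr)
      assume "j \<notin> {..<m}"
      then have "A i j = idm i j" "i \<noteq> j"
        using assms by (auto simp: idm_beyond_def)
      then show False
        using j by (simp add: idm_def)
    qed
  qed
qed auto

lemma mv_eq_sum_lessThan:
  assumes "zero_beyond n v" "n \<le> m"
  shows "mv M v i = (\<Sum>j<m. M i j * v j)"
  unfolding mv_def
proof (rule sum.mono_neutral_left)
  show "{j. v j \<noteq> 0} \<subseteq> {..<m}"
  proof
    fix j assume "j \<in> {j. v j \<noteq> 0}"
    then have "\<not> n \<le> j"
      using assms(1) by (auto simp: zero_beyond_def)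
    then show "j \<in> {..<m}"
      using assms(2) by simp
  qed
qed auto

lemma sum_idm_mult:
  assumes "i < m"
  shows "(\<Sum>j<m. idm i j * f j) = (f i :: bit)"
proof -
  have "(\<Sum>j<m. idm i j * f j) = (\<Sum>j\<in>{i}. idm i j * f j)"
    using assms by (intro sum.mono_neutral_right) (auto simp: idm_def)
  then show ?thesis
    by (simp add: idm_def)
qed

lemma sum_mult_idm:
  assumes "k < m"
  shows "(\<Sum>j<m. f j * idm j k) = (f k :: bit)"
proof -
  have "(\<Sum>j<m. f j * idm j k) = (\<Sum>j\<in>{k}. f j * idm j k)"
    using assms by (intro sum.mono_neutral_right) (auto simp: idm_def)
  then show ?thesis
    by (simp add: idm_def)
qed

lemma idm_beyond_mm:
  assumes A: "idm_beyond n A" and B: "idm_beyond n B"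
  shows "idm_beyond n (mm A B)"
  unfolding idm_beyond_def
proof (intro allI impI)
  fix i k assume ik: "n \<le> i \<or> n \<le> k"
  define m where "m = max n (max (Suc i) (Suc k))"
  have m: "n \<le> m" "i < m" "k < m"
    by (auto simp: m_def)
  show "mm A B i k = idm i k"
  proof (cases "n \<le> i")
    case True
    then have "mm A B i k = (\<Sum>j<m. idm i j * B j k)"
      using A by (auto simp: mm_eq_sum_lessThan[OF A m(1,2)] idm_beyond_def intro!: sum.cong)
    then show ?thesis
      using B True by (simp add: sum_idm_mult[OF m(2)] idm_beyond_def)
  next
    case False
    then have "mm A B i k = (\<Sum>j<m. A i j * idm j k)"
      using B ik by (auto simp: mm_eq_sum_lessThan[OF A m(1,2)] idm_beyond_def intro!: sum.cong)
    then show ?thesis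
      using A False ik by (simp add: sum_mult_idm[OF m(3)] idm_beyond_def)
  qed
qed

lemma zero_beyond_mv:
  assumes M: "idm_beyond n M" and v: "zero_beyond n v"
  shows "zero_beyond n (mv M v)"
  unfolding zero_beyond_def
proof (intro allI impI)
  fix i assume i: "n \<le> i"
  define m where "m = max n (Suc i)"
  have "mv M v i = (\<Sum>j<m. M i j * v j)"
    by (rule mv_eq_sum_lessThan[OF v]) (simp add: m_def)
  also have "\<dots> = (\<Sum>j<m. idm i j * v j)"
    using M i by (auto simp: idm_beyond_def intro!: sum.cong)
  also have "\<dots> = v i"
    by (rule sum_idm_mult) (simp add: m_def)
  finally show "mv M v i = 0"
    using v i by (simp add: zero_beyond_def)
qed

lemma mm_assoc_beyond:
  assumes A: "idm_beyond n A" and B: "idm_beyond n B" and C: "idm_beyond n C"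
  shows "mm (mm A B) C = mm A (mm B C)"
proof (intro ext)
  fix i l
  define m where "m = max n (Suc i)"
  have m: "n \<le> m" "i < m"
    by (auto simp: m_def)
  have "mm (mm A B) C i l = (\<Sum>j<m. \<Sum>p<m. A i p * B p j * C j l)"
    by (simp add: mm_eq_sum_lessThan[OF idm_beyond_mm[OF A B] m] mm_eq_sum_lessThan[OF A m]
        sum_distrib_right)
  also have "\<dots> = (\<Sum>p<m. \<Sum>j<m. A i p * B p j * C j l)"
    by (rule sum.swap)
  also have "\<dots> = (\<Sum>p<m. A i p * (\<Sum>j<m. B p j * C j l))"
    by (simp add: sum_distrib_left mult.assoc)
  also have "\<dots> = mm A (mm B C) i l"
    by (simp add: mm_eq_sum_lessThan[OF A m] mm_eq_sum_lessThan[OF B m(1)])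
  finally show "mm (mm A B) C i l = mm A (mm B C) i l" .
qed

lemma mv_mm_beyond:
  assumes A: "idm_beyond n A" and B: "idm_beyond n B" and v: "zero_beyond n v"
  shows "mv (mm A B) v = mv A (mv B v)"
proof (intro ext)
  fix i
  define m where "m = max n (Suc i)"
  have m: "n \<le> m" "i < m"
    by (auto simp: m_def)
  have "mv (mm A B) v i = (\<Sum>j<m. \<Sum>p<m. A i p * B p j * v j)"
    by (simp add: mv_eq_sum_lessThan[OF v m(1)] mm_eq_sum_lessThan[OF A m] sum_distrib_right)
  also have "\<dots> = (\<Sum>p<m. \<Sum>j<m. A i p * B p j * v j)"
    by (rule sum.swap)
  also have "\<dots> = (\<Sum>p<m. A i p * (\<Sum>j<m. B p j * v j))"
    by (simp add: sum_distrib_left mult.assoc)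
  also have "\<dots> = mv A (mv B v) i"
    by (simp add: mv_eq_sum_lessThan[OF zero_beyond_mv[OF B v] m(1)] mv_eq_sum_lessThan[OF v m(1)])
  finally show "mv (mm A B) v i = mv A (mv B v) i" .
qed

lemma mm_idm_left [simp]: "mm idm B = B"
proof (intro ext)
  fix i k
  have "{j. idm i j \<noteq> 0} = {i}"
    by (auto simp: idm_def)
  then show "mm idm B i k = B i k"
    by (simp add: mm_def idm_def)
qed

lemma mv_unit_vec:
  assumes "idm_beyond n M"
  shows "mv M (\<lambda>i. if i = j then 1 else 0) k = M k j"
proof -
  have "zero_beyond (Suc j) (\<lambda>i. if i = j then (1::bit) else 0)"
    by (simp add: zero_beyond_def)
  then have "mv M (\<lambda>i. if i = j then 1 else 0) k = (\<Sum>i<Suc j. M k i * (if i = j then 1 else 0))"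
    by (rule mv_eq_sum_lessThan) simp
  also have "\<dots> = M k j"
    by (simp add: if_distrib sum.delta' cong: if_cong)
  finally show ?thesis .
qed

lemma mv_zero [simp]: "mv M (\<lambda>_. 0) = (\<lambda>_. 0)"
  by (simp add: mv_def)

lemma mv_uminus: "mv M (\<lambda>i. - v i) = (\<lambda>i. - mv M v i)"
  by (simp add: mv_def)

lemma fsupp_zero [simp]: "fsupp (\<lambda>_. 0)"
  by (simp add: fsupp_def)

lemma fsupp_add: "fsupp v \<Longrightarrow> fsupp w \<Longrightarrow> fsupp (\<lambda>i. v i + w i)"
  unfolding fsupp_def by (rule finite_subset[of _ "{i. v i \<noteq> 0} \<union> {i. w i \<noteq> 0}"]) auto

lemma fsupp_uminus: "fsupp v \<Longrightarrow> fsupp (\<lambda>i. - v i)"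
  by (simp add: fsupp_def)

lemma finitary_idm: "finitary idm"
  by (simp add: finitary_def)

lemma finitary_mm:
  assumes "finitary A" "finitary B"
  shows "finitary (mm A B)"
proof -
  have "\<forall>\<^sub>F n in sequentially. idm_beyond n A \<and> idm_beyond n B"
    using assms by (intro eventually_conj eventually_idm_beyond)
  then have "\<exists>n. idm_beyond n A \<and> idm_beyond n B"
    by (rule eventually_happens'[OF sequentially_bot])
  then obtain n where "idm_beyond n A" "idm_beyond n B"
    by blast
  then show ?thesis
    unfolding finitary_iff_idm_beyond by (blast intro: idm_beyond_mm)
qed

lemma mm_assoc:
  assumes "finitary A" "finitary B" "finitary C"
  shows "mm (mm A B) C = mm A (mm B C)"
proof -
  have "\<forall>\<^sub>F n in sequentially. idm_beyond n A \<and> idm_beyond n B \<and> idm_beyond n C"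
    using assms by (intro eventually_conj eventually_idm_beyond)
  then have "\<exists>n. idm_beyond n A \<and> idm_beyond n B \<and> idm_beyond n C"
    by (rule eventually_happens'[OF sequentially_bot])
  then obtain n where "idm_beyond n A" "idm_beyond n B" "idm_beyond n C"
    by blast
  then show ?thesis
    by (rule mm_assoc_beyond)
qed

lemma mm_idm_right:
  assumes "finitary A"
  shows "mm A idm = A"
proof (intro ext)
  fix i k
  obtain n where A: "idm_beyond n A"
    using assms by (auto simp: finitary_iff_idm_beyond)
  show "mm A idm i k = A i k"
    using mm_eq_sum_lessThan[OF A, of "max n (max (Suc i) (Suc k))" i] sum_mult_idm[of k] by simp
qed

lemma fsupp_mv:
  assumes "finitary M" "fsupp v"
  shows "fsupp (mv M v)"
proof -
  have "\<forall>\<^sub>F n in sequentially. idm_beyond n M \<and> zero_beyond n v"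
    using assms by (intro eventually_conj eventually_idm_beyond eventually_zero_beyond)
  then have "\<exists>n. idm_beyond n M \<and> zero_beyond n v"
    by (rule eventually_happens'[OF sequentially_bot])
  then obtain n where "idm_beyond n M" "zero_beyond n v"
    by blast
  then have "zero_beyond n (mv M v)"
    by (rule zero_beyond_mv)
  then have "{i. mv M v i \<noteq> 0} \<subseteq> {..<n}"
    by (auto simp: zero_beyond_def not_less[symmetric])
  then show ?thesis
    unfolding fsupp_def by (rule finite_subset) simp
qed

lemma mv_add:
  assumes "fsupp v" "fsupp w"
  shows "mv M (\<lambda>i. v i + w i) = (\<lambda>i. mv M v i + mv M w i)"
proof -
  have "\<forall>\<^sub>F n in sequentially. zero_beyond n v \<and> zero_beyond n w"
    using assms by (intro eventually_conj eventually_zero_beyond)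
  then have "\<exists>n. zero_beyond n v \<and> zero_beyond n w"
    by (rule eventually_happens'[OF sequentially_bot])
  then obtain n where v: "zero_beyond n v" and w: "zero_beyond n w"
    by blast
  moreover have vw: "zero_beyond n (\<lambda>i. v i + w i)"
    using v w by (simp add: zero_beyond_def)
  ultimately show ?thesis
    by (simp add: fun_eq_iff mv_eq_sum_lessThan[OF v order_refl] mv_eq_sum_lessThan[OF w order_refl]
        mv_eq_sum_lessThan[OF vw order_refl] sum.distrib distrib_left)
qed

lemma mv_mm:
  assumes "finitary A" "finitary B" "fsupp v"
  shows "mv (mm A B) v = mv A (mv B v)"
proof -
  have "\<forall>\<^sub>F n in sequentially. idm_beyond n A \<and> idm_beyond n B \<and> zero_beyond n v"
    using assms by (intro eventually_conj eventually_idm_beyond eventually_zero_beyond)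
  then have "\<exists>n. idm_beyond n A \<and> idm_beyond n B \<and> zero_beyond n v"
    by (rule eventually_happens'[OF sequentially_bot])
  then obtain n where "idm_beyond n A" "idm_beyond n B" "zero_beyond n v"
    by blast
  then show ?thesis
    by (rule mv_mm_beyond)
qed

lemma mv_idm:
  assumes "fsupp v"
  shows "mv idm v = v"
proof
  fix i
  obtain n where "zero_beyond n v"
    using eventually_happens'[OF sequentially_bot eventually_zero_beyond[OF assms]] by blast
  then show "mv idm v i = v i"
    using mv_eq_sum_lessThan[of n v "max n (Suc i)"] sum_idm_mult[of i "max n (Suc i)" v] by simp
qed

lemma GLinfD:
  assumes "g \<in> GLinf"
  shows "finitary g" "finitary (minv g)" "mm g (minv g) = idm" "mm (minv g) g = idm"
proof -
  have "\<exists>B. finitary B \<and> mm g B = idm \<and> mm B g = idm"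
    using assms by (auto simp: GLinf_def)
  then have "finitary (minv g) \<and> mm g (minv g) = idm \<and> mm (minv g) g = idm"
    unfolding minv_def by (rule someI_ex)
  then show "finitary g" "finitary (minv g)" "mm g (minv g) = idm" "mm (minv g) g = idm"
    using assms by (auto simp: GLinf_def)
qed

lemma idm_GLinf: "idm \<in> GLinf"
  unfolding GLinf_def using finitary_idm mm_idm_left by blast

lemma minv_GLinf: "g \<in> GLinf \<Longrightarrow> minv g \<in> GLinf"
  using GLinfD unfolding GLinf_def by blast

lemma mm_GLinf:
  assumes g: "g \<in> GLinf" and h: "h \<in> GLinf"
  shows "mm g h \<in> GLinf"
proof -
  note G = GLinfD[OF g] and H = GLinfD[OF h]
  have "mm h (mm (minv h) (minv g)) = mm (mm h (minv h)) (minv g)"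
    by (rule mm_assoc[OF H(1,2) G(2), symmetric])
  then have "mm (mm g h) (mm (minv h) (minv g)) = idm"
    by (simp add: mm_assoc G H finitary_mm)
  moreover have "mm (minv g) (mm g h) = mm (mm (minv g) g) h"
    by (rule mm_assoc[OF G(2,1) H(1), symmetric])
  then have "mm (mm (minv h) (minv g)) (mm g h) = idm"
    by (simp add: mm_assoc G H finitary_mm)
  ultimately show ?thesis
    unfolding GLinf_def using G H finitary_mm by blast
qed

lemma minv_idm: "minv idm = idm"
  using GLinfD(3)[OF idm_GLinf] by simp

lemma mv_minv_mv:
  assumes "k \<in> GLinf" "fsupp u"
  shows "mv k (mv (minv k) u) = u" "mv (minv k) (mv k u) = u"
  using assms by (simp_all add: mv_mm[symmetric] GLinfD mv_idm)

section \<open>The group \<open>G\<close>\<close>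

definition gmat :: "grp \<Rightarrow> mat2" where
  "gmat x = fst (Rep_grp x)"

definition gvec :: "grp \<Rightarrow> vec2" where
  "gvec x = snd (Rep_grp x)"

lemma gmat_GLinf: "gmat x \<in> GLinf" and fsupp_gvec: "fsupp (gvec x)"
  using Rep_grp[of x] by (auto simp: gmat_def gvec_def)

lemma finitary_gmat: "finitary (gmat x)"
  using GLinfD(1)[OF gmat_GLinf] .

lemma grp_eqI: "gmat x = gmat y \<Longrightarrow> gvec x = gvec y \<Longrightarrow> x = y"
  by (metis Rep_grp_inject gmat_def gvec_def prod.collapse)

lemma gmat_Abs_grp: "g \<in> GLinf \<Longrightarrow> fsupp v \<Longrightarrow> gmat (Abs_grp (g, v)) = g"
  and gvec_Abs_grp: "g \<in> GLinf \<Longrightarrow> fsupp v \<Longrightarrow> gvec (Abs_grp (g, v)) = v"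
  by (simp_all add: Abs_grp_inverse gmat_def gvec_def)

lemma gmat_gmul: "gmat (gmul x y) = mm (gmat x) (gmat y)"
  and gvec_gmul: "gvec (gmul x y) = (\<lambda>i. gvec x i + mv (gmat x) (gvec y) i)"
proof -
  have "gmul x y = Abs_grp (mm (gmat x) (gmat y), \<lambda>i. gvec x i + mv (gmat x) (gvec y) i)"
    unfolding gmul_def gmat_def gvec_def by (simp add: case_prod_beta)
  moreover have "fsupp (\<lambda>i. gvec x i + mv (gmat x) (gvec y) i)"
    by (intro fsupp_add fsupp_gvec fsupp_mv finitary_gmat)
  ultimately show "gmat (gmul x y) = mm (gmat x) (gmat y)"
    "gvec (gmul x y) = (\<lambda>i. gvec x i + mv (gmat x) (gvec y) i)"
    by (simp_all add: gmat_Abs_grp gvec_Abs_grp mm_GLinf gmat_GLinf)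
qed

lemma gmat_gone: "gmat gone = idm" and gvec_gone: "gvec gone = (\<lambda>_. 0)"
  unfolding gone_def by (simp_all add: gmat_Abs_grp gvec_Abs_grp idm_GLinf)

lemma gmat_ginv: "gmat (ginv x) = minv (gmat x)"
  and gvec_ginv: "gvec (ginv x) = (\<lambda>i. - mv (minv (gmat x)) (gvec x) i)"
proof -
  have "ginv x = Abs_grp (minv (gmat x), \<lambda>i. - mv (minv (gmat x)) (gvec x) i)"
    unfolding ginv_def gmat_def gvec_def by (simp add: case_prod_beta)
  moreover have "fsupp (\<lambda>i. - mv (minv (gmat x)) (gvec x) i)"
    by (intro fsupp_uminus fsupp_mv fsupp_gvec GLinfD(2) gmat_GLinf)
  ultimately show "gmat (ginv x) = minv (gmat x)"
    "gvec (ginv x) = (\<lambda>i. - mv (minv (gmat x)) (gvec x) i)"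
    by (simp_all add: gmat_Abs_grp gvec_Abs_grp minv_GLinf gmat_GLinf)
qed

lemma gmul_assoc: "gmul (gmul x y) z = gmul x (gmul y z)"
proof (rule grp_eqI)
  show "gmat (gmul (gmul x y) z) = gmat (gmul x (gmul y z))"
    by (simp add: gmat_gmul mm_assoc finitary_gmat)
  have "fsupp (mv (gmat y) (gvec z))"
    by (intro fsupp_mv finitary_gmat fsupp_gvec)
  then show "gvec (gmul (gmul x y) z) = gvec (gmul x (gmul y z))"
    by (simp add: gvec_gmul gmat_gmul mv_add fsupp_gvec mv_mm finitary_gmat add.assoc)
qed

lemma gmul_gone_left: "gmul gone x = x"
  by (rule grp_eqI) (simp_all add: gmat_gmul gvec_gmul gmat_gone gvec_gone mv_idm fsupp_gvec)

lemma gmul_gone_right: "gmul x gone = x"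
  by (rule grp_eqI) (simp_all add: gmat_gmul gvec_gmul gmat_gone gvec_gone mm_idm_right finitary_gmat)

lemma gmul_ginv_left: "gmul (ginv x) x = gone"
  by (rule grp_eqI) (simp_all add: gmat_gmul gvec_gmul gmat_gone gvec_gone gmat_ginv gvec_ginv GLinfD gmat_GLinf)

lemma gmul_ginv_right: "gmul x (ginv x) = gone"
proof (rule grp_eqI)
  show "gmat (gmul x (ginv x)) = gmat gone"
    by (simp add: gmat_gmul gmat_ginv gmat_gone GLinfD gmat_GLinf)
  show "gvec (gmul x (ginv x)) = gvec gone"
    by (simp add: gvec_gmul gvec_ginv gvec_gone mv_uminus mv_minv_mv gmat_GLinf fsupp_gvec)
qed

lemma ginv_gmul_cancel: "gmul (ginv a) (gmul a x) = x"
  by (simp add: gmul_assoc[symmetric] gmul_ginv_left gmul_gone_left)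

lemma gmul_ginv_cancel: "gmul a (gmul (ginv a) x) = x"
  by (simp add: gmul_assoc[symmetric] gmul_ginv_right gmul_gone_left)

lemma ginv_ginv: "ginv (ginv x) = x"
  by (metis ginv_gmul_cancel gmul_ginv_left gmul_gone_right)

lemma ginv_gmul: "ginv (gmul a b) = gmul (ginv b) (ginv a)"
  by (metis ginv_gmul_cancel gmul_assoc gmul_ginv_right gmul_gone_right)

lemma ginv_gone: "ginv gone = gone"
  by (metis gmul_ginv_left gmul_gone_right)

lemma bij_gmul: "bij_betw (gmul a) UNIV UNIV"
  by (rule bij_betwI[where g = "gmul (ginv a)"]) (auto simp: ginv_gmul_cancel gmul_ginv_cancel)

lemma gmat_vecG: "fsupp v \<Longrightarrow> gmat (vecG v) = idm"
  and gvec_vecG: "fsupp v \<Longrightarrow> gvec (vecG v) = v"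
  unfolding vecG_def by (simp_all add: gmat_Abs_grp gvec_Abs_grp idm_GLinf)

lemma gmat_matG: "g \<in> GLinf \<Longrightarrow> gmat (matG g) = g"
  and gvec_matG: "g \<in> GLinf \<Longrightarrow> gvec (matG g) = (\<lambda>_. 0)"
  unfolding matG_def by (simp_all add: gmat_Abs_grp gvec_Abs_grp)

lemma gmul_vecG: "fsupp a \<Longrightarrow> fsupp b \<Longrightarrow> gmul (vecG a) (vecG b) = vecG (\<lambda>i. a i + b i)"
  by (rule grp_eqI) (simp_all add: gmat_gmul gvec_gmul gmat_vecG gvec_vecG fsupp_add mv_idm)

lemma gmul_matG: "g \<in> GLinf \<Longrightarrow> h \<in> GLinf \<Longrightarrow> gmul (matG g) (matG h) = matG (mm g h)"
  by (rule grp_eqI) (simp_all add: gmat_gmul gvec_gmul gmat_matG gvec_matG mm_GLinf)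

lemma gmul_matG_vecG:
  "g \<in> GLinf \<Longrightarrow> fsupp v \<Longrightarrow> gmul (matG g) (vecG v) = gmul (vecG (mv g v)) (matG g)"
  by (rule grp_eqI)
     (simp_all add: gmat_gmul gvec_gmul gmat_matG gvec_matG gmat_vecG gvec_vecG fsupp_mv GLinfD(1) mm_idm_right)

lemma ginv_vecG: "fsupp v \<Longrightarrow> ginv (vecG v) = vecG v"
  by (rule grp_eqI) (simp_all add: gmat_ginv gvec_ginv gmat_vecG gvec_vecG minv_idm mv_idm)

lemma ginv_matG: "g \<in> GLinf \<Longrightarrow> ginv (matG g) = matG (minv g)"
  by (rule grp_eqI) (simp_all add: gmat_ginv gvec_ginv gmat_matG gvec_matG minv_GLinf)

lemma vecG_gmul_matG: "gmul (vecG (gvec x)) (matG (gmat x)) = x"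
  by (rule grp_eqI) (simp_all add: gmat_gmul gvec_gmul gmat_matG gvec_matG gmat_vecG gvec_vecG fsupp_gvec gmat_GLinf)

lemma Vsub_iff: "x \<in> Vsub \<longleftrightarrow> gmat x = idm"
proof
  assume "gmat x = idm"
  then have "x = vecG (gvec x)"
    by (intro grp_eqI) (simp_all add: gmat_vecG gvec_vecG fsupp_gvec)
  then show "x \<in> Vsub"
    unfolding Vsub_def using fsupp_gvec by blast
qed (auto simp: Vsub_def gmat_vecG)

lemma gone_Vsub: "gone \<in> Vsub"
  by (simp add: Vsub_iff gmat_gone)

lemma Vsub_gmul_commute: "a \<in> Vsub \<Longrightarrow> b \<in> Vsub \<Longrightarrow> gmul a b = gmul b a"
  unfolding Vsub_def by (auto simp: gmul_vecG add.commute)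

lemma ginv_Vsub: "a \<in> Vsub \<Longrightarrow> ginv a = a"
  unfolding Vsub_def by (auto simp: ginv_vecG)

lemma Vsub_conj: "b \<in> Vsub \<Longrightarrow> gmul a (gmul b (ginv a)) \<in> Vsub"
  by (simp add: Vsub_iff gmat_gmul gmat_ginv GLinfD gmat_GLinf)

(* Commuting with every w in V forces gmat x (w) = w, and a matrix fixing every unit vector is
  the identity. *)

lemma centraliser_Vsub:
  assumes "\<And>w. fsupp w \<Longrightarrow> gmul x (vecG w) = gmul (vecG w) x"
  shows "x \<in> Vsub"
proof -
  have fixes_fsupp: "mv (gmat x) w = w" if "fsupp w" for w
  proof -
    have "gvec (gmul x (vecG w)) = gvec (gmul (vecG w) x)"
      using assms[OF that] by simp
    then have "\<And>i. gvec x i + mv (gmat x) w i = w i + gvec x i"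
      by (simp add: gvec_gmul gvec_vecG gmat_vecG that mv_idm fsupp_gvec fun_eq_iff)
    then show ?thesis
      by (simp add: fun_eq_iff add.commute)
  qed
  obtain n where n: "idm_beyond n (gmat x)"
    using finitary_gmat finitary_iff_idm_beyond by blast
  have "gmat x i j = idm i j" for i j
  proof -
    have "fsupp (\<lambda>i. if i = j then (1::bit) else 0)"
      by (simp add: fsupp_def)
    then show ?thesis
      using mv_unit_vec[OF n, of j i] by (simp add: fixes_fsupp idm_def)
  qed
  then show ?thesis
    by (simp add: Vsub_iff fun_eq_iff)
qed

section \<open>The left regular representation\<close>

lemma l2_translate: "\<xi> \<in> l2 \<Longrightarrow> (\<lambda>h. \<xi> (gmul a h)) \<in> l2"
  unfolding mem_l2_iff using summable_on_reindex_bij_betw[OF bij_gmul, of "\<lambda>h. (cmod (\<xi> h))\<^sup>2" a] by simp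

lemma sqnorm_translate: "sqnorm (\<lambda>h. \<xi> (gmul a h)) = sqnorm \<xi>"
  unfolding sqnorm_def using infsum_reindex_bij_betw[OF bij_gmul, of "\<lambda>h. (cmod (\<xi> h))\<^sup>2" a] by simp

lemma uop_l2: "\<xi> \<in> l2 \<Longrightarrow> uop a \<xi> = (\<lambda>h. \<xi> (gmul (ginv a) h))"
  by (simp add: uop_def)

lemma uop_outside_l2: "\<xi> \<notin> l2 \<Longrightarrow> uop a \<xi> = (\<lambda>_. 0)"
  by (simp add: uop_def)

lemma bop_uop: "bop (uop a)"
  by (rule bopI[where C = 1])
     (simp_all add: uop_l2 uop_outside_l2 l2_translate l2_lin lnorm_eq_sqrt_sqnorm sqnorm_translate)

lemma uop_gmul: "uop (gmul a b) = uop a \<circ> uop b"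
proof
  fix \<xi>
  show "uop (gmul a b) \<xi> = (uop a \<circ> uop b) \<xi>"
    by (cases "\<xi> \<in> l2") (simp_all add: uop_l2 uop_outside_l2 l2_translate ginv_gmul gmul_assoc)
qed

lemma uop_gone: "uop gone = idop"
  by (rule ext) (simp add: uop_def idop_def ginv_gone gmul_gone_left)

lemma uop_ginv_right: "uop a \<circ> uop (ginv a) = idop"
  by (simp flip: uop_gmul add: gmul_ginv_right uop_gone)

lemma uop_ginv_left: "uop (ginv a) \<circ> uop a = idop"
  by (simp flip: uop_gmul add: gmul_ginv_left uop_gone)

lemma adj_uop: "adj (uop a) = uop (ginv a)"
proof (rule adj_eqI[OF bop_uop bop_uop])
  fix \<xi> \<eta> assume "\<xi> \<in> l2" "\<eta> \<in> l2"
  then have "linner \<xi> (uop (ginv a) \<eta>) = infsum (\<lambda>k. (\<lambda>h. cnj (\<xi> (gmul (ginv a) h)) * \<eta> h) (gmul a k)) UNIV"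
    by (simp add: linner_def uop_l2 ginv_ginv ginv_gmul_cancel)
  also have "\<dots> = infsum (\<lambda>h. cnj (\<xi> (gmul (ginv a) h)) * \<eta> h) UNIV"
    by (rule infsum_reindex_bij_betw[OF bij_gmul])
  also have "\<dots> = linner (uop a \<xi>) \<eta>"
    using \<open>\<xi> \<in> l2\<close> by (simp add: linner_def uop_l2)
  finally show "linner (uop a \<xi>) \<eta> = linner \<xi> (uop (ginv a) \<eta>)"
    by simp
qed

lemma uop_delta: "uop a (delta b) = delta (gmul a b)"
  unfolding uop_l2[OF delta_l2] by (auto simp: delta_def fun_eq_iff ginv_gmul_cancel gmul_ginv_cancel)

lemma uop_inj: "uop a = uop b \<Longrightarrow> a = b"
  by (metis uop_delta gmul_gone_right delta_def zero_neq_one)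

lemma uop_mem_LG: "a \<in> N \<Longrightarrow> uop a \<in> LG N"
  unfolding LG_def using subset_vNgen[of "uop ` N"] bop_uop by blast

lemma is_vNa_LG: "is_vNa (LG N)"
  unfolding LG_def by (rule is_vNa_vNgen) (auto simp: bop_uop)

lemma LG_mono: "N \<subseteq> N' \<Longrightarrow> LG N \<subseteq> LG N'"
  unfolding LG_def by (intro vNgen_mono image_mono)

lemma comp_uop_ginv_cancel:
  assumes "bop Z"
  shows "uop a \<circ> (uop (ginv a) \<circ> Z) = Z" "uop (ginv a) \<circ> (uop a \<circ> Z) = Z"
  using assms by (simp_all add: comp_assoc[symmetric] uop_ginv_right uop_ginv_left comp_idop_left)

lemma conj_uop_commute:
  assumes A: "bop A" and B: "bop B"
    and "A \<circ> (uop (ginv a) \<circ> B \<circ> uop a) = uop (ginv a) \<circ> B \<circ> uop a \<circ> A"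
  shows "uop a \<circ> A \<circ> uop (ginv a) \<circ> B = B \<circ> (uop a \<circ> A \<circ> uop (ginv a))"
proof -
  have "uop a \<circ> (A \<circ> (uop (ginv a) \<circ> B \<circ> uop a)) \<circ> uop (ginv a)
      = uop a \<circ> (uop (ginv a) \<circ> B \<circ> uop a \<circ> A) \<circ> uop (ginv a)"
    using assms(3) by simp
  then show ?thesis
    using A B by (simp add: comp_assoc comp_uop_ginv_cancel uop_ginv_right comp_idop_right bop_comp bop_uop)
qed

lemma conj_uop_mem_vNgen:
  assumes S: "S \<subseteq> Collect bop"
    and gens: "\<And>A. A \<in> S \<union> adj ` S \<Longrightarrow> uop a \<circ> A \<circ> uop (ginv a) \<in> vNgen S"
    and T: "T \<in> vNgen S"
  shows "uop a \<circ> T \<circ> uop (ginv a) \<in> vNgen S"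
  unfolding vNgen_def
proof (rule commI)
  have "bop T"
    using T vNgen_subset_bop by blast
  then show "bop (uop a \<circ> T \<circ> uop (ginv a))"
    by (intro bop_comp bop_uop)
  fix B assume B: "B \<in> comm (S \<union> adj ` S)"
  then have "bop B"
    using comm_subset_bop by blast
  (* u_a^* B u_a commutes with the generators because B commutes with their conjugates. *)
  have "uop (ginv a) \<circ> B \<circ> uop a \<in> comm (S \<union> adj ` S)"
  proof (rule commI)
    show "bop (uop (ginv a) \<circ> B \<circ> uop a)"
      using \<open>bop B\<close> by (intro bop_comp bop_uop)
    fix A assume A: "A \<in> S \<union> adj ` S"
    then have "bop A"
      using adj_closure_subset_bop[OF S] by blast
    have "B \<in> comm (vNgen S)"
      using B comm_vNgen[OF S] by simp
    then have "B \<circ> (uop a \<circ> A \<circ> uop (ginv a)) = uop a \<circ> A \<circ> uop (ginv a) \<circ> B"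
      using gens[OF A] by (rule commD)
    then show "uop (ginv a) \<circ> B \<circ> uop a \<circ> A = A \<circ> (uop (ginv a) \<circ> B \<circ> uop a)"
      using conj_uop_commute[OF \<open>bop B\<close> \<open>bop A\<close>, of "ginv a"] by (simp add: ginv_ginv)
  qed
  then have "T \<circ> (uop (ginv a) \<circ> B \<circ> uop a) = uop (ginv a) \<circ> B \<circ> uop a \<circ> T"
    using T by (intro commD[where X = "comm (S \<union> adj ` S)"]) (simp_all add: vNgen_def)
  then show "uop a \<circ> T \<circ> uop (ginv a) \<circ> B = B \<circ> (uop a \<circ> T \<circ> uop (ginv a))"
    by (rule conj_uop_commute[OF \<open>bop T\<close> \<open>bop B\<close>])
qed

section \<open>The averaging operators \<open>f\<^sub>g\<close>\<close>

lemma mem_Rng_iff: "w \<in> Rng g \<longleftrightarrow> (\<exists>v. fsupp v \<and> w = (\<lambda>i. mv g v i + v i))"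
  by (simp add: Rng_def bit_diff_eq_add)

lemma Rng_subset_zero_beyond:
  assumes "idm_beyond n g"
  shows "Rng g \<subseteq> {w. zero_beyond n w}"
proof
  fix w assume "w \<in> Rng g"
  then obtain v where v: "fsupp v" "w = (\<lambda>i. mv g v i + v i)"
    by (auto simp: mem_Rng_iff)
  obtain k where k: "zero_beyond k v"
    using eventually_happens'[OF sequentially_bot eventually_zero_beyond[OF v(1)]] by blast
  have "mv g v i = v i" if "n \<le> i" for i
  proof -
    have "mv g v i = (\<Sum>j<max k (Suc i). g i j * v j)"
      by (rule mv_eq_sum_lessThan[OF k]) simp
    also have "\<dots> = (\<Sum>j<max k (Suc i). idm i j * v j)"
      using assms that by (auto simp: idm_beyond_def intro!: sum.cong)
    finally show ?thesis
      by (simp add: sum_idm_mult)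
  qed
  then show "w \<in> {w. zero_beyond n w}"
    by (simp add: v(2) zero_beyond_def)
qed

lemma finite_Rng: "g \<in> GLinf \<Longrightarrow> finite (Rng g)"
  using GLinfD(1) finitary_iff_idm_beyond Rng_subset_zero_beyond zero_beyond_finite finite_subset
  by metis

lemma fsupp_Rng: "g \<in> GLinf \<Longrightarrow> w \<in> Rng g \<Longrightarrow> fsupp w"
  by (auto simp: mem_Rng_iff intro: fsupp_add fsupp_mv GLinfD(1))

lemma zero_in_Rng: "(\<lambda>_. 0) \<in> Rng g"
  by (auto simp: mem_Rng_iff intro!: exI[of _ "\<lambda>_. 0"])

lemma card_Rng_pos: "g \<in> GLinf \<Longrightarrow> card (Rng g) > 0"
  using finite_Rng zero_in_Rng by (auto simp: card_gt_0_iff)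

lemma add_mem_Rng:
  assumes g: "g \<in> GLinf" and "a \<in> Rng g" "b \<in> Rng g"
  shows "(\<lambda>i. a i + b i) \<in> Rng g"
proof -
  obtain u v where "fsupp u" "a = (\<lambda>i. mv g u i + u i)" "fsupp v" "b = (\<lambda>i. mv g v i + v i)"
    using assms by (auto simp: mem_Rng_iff)
  then show ?thesis
    unfolding mem_Rng_iff
    by (intro exI[of _ "\<lambda>i. u i + v i"]) (simp add: fsupp_add mv_add algebra_simps)
qed

lemma add_minv_mem_Rng:
  assumes g: "g \<in> GLinf" and w: "fsupp w"
  shows "(\<lambda>i. w i + mv (minv g) w i) \<in> Rng g"
  unfolding mem_Rng_iff
  by (intro exI[of _ "mv (minv g) w"]) (simp add: fsupp_mv GLinfD[OF g] w mv_minv_mv[OF g w])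

lemma sum_Rng_translate:
  assumes g: "g \<in> GLinf" and d: "d \<in> Rng g"
  shows "(\<Sum>v\<in>Rng g. F (\<lambda>i. v i + d i)) = (\<Sum>v\<in>Rng g. F v)"
  by (rule sum.reindex_bij_witness[where i = "\<lambda>v i. v i + d i" and j = "\<lambda>v i. v i + d i"])
     (simp_all add: add_mem_Rng[OF g _ d] add.assoc)

definition mconj :: "mat2 \<Rightarrow> mat2 \<Rightarrow> mat2" where
  "mconj k g = mm (mm k g) (minv k)"

lemma mconj_GLinf: "k \<in> GLinf \<Longrightarrow> g \<in> GLinf \<Longrightarrow> mconj k g \<in> GLinf"
  unfolding mconj_def by (intro mm_GLinf minv_GLinf)

lemma matG_mconj:
  "k \<in> GLinf \<Longrightarrow> g \<in> GLinf \<Longrightarrow> matG (mconj k g) = gmul (matG k) (gmul (matG g) (ginv (matG k)))"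
  unfolding mconj_def
  by (simp add: gmul_matG ginv_matG minv_GLinf mm_GLinf mm_assoc GLinfD)

lemma mv_mconj:
  assumes k: "k \<in> GLinf" and g: "g \<in> GLinf" and v: "fsupp v"
  shows "mv (mconj k g) (mv k v) = mv k (mv g v)"
  using assms unfolding mconj_def
  by (simp add: mv_mm GLinfD finitary_mm fsupp_mv mv_minv_mv)

lemma Rng_mconj:
  assumes k: "k \<in> GLinf" and g: "g \<in> GLinf"
  shows "Rng (mconj k g) = mv k ` Rng g"
proof
  show "mv k ` Rng g \<subseteq> Rng (mconj k g)"
  proof
    fix w assume "w \<in> mv k ` Rng g"
    then obtain v where v: "fsupp v" "w = mv k (\<lambda>i. mv g v i + v i)"
      by (auto simp: mem_Rng_iff)
    then have "w = (\<lambda>i. mv (mconj k g) (mv k v) i + mv k v i)"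
      by (simp add: mv_mconj[OF k g v(1)] mv_add fsupp_mv GLinfD g)
    then show "w \<in> Rng (mconj k g)"
      unfolding mem_Rng_iff using fsupp_mv[OF GLinfD(1)[OF k] v(1)] by blast
  qed
next
  show "Rng (mconj k g) \<subseteq> mv k ` Rng g"
  proof
    fix w assume "w \<in> Rng (mconj k g)"
    then obtain u where u: "fsupp u" "w = (\<lambda>i. mv (mconj k g) u i + u i)"
      by (auto simp: mem_Rng_iff)
    define v where "v = mv (minv k) u"
    have v: "fsupp v" "mv k v = u"
      using u(1) by (simp_all add: v_def fsupp_mv GLinfD k mv_minv_mv)
    then have "w = mv k (\<lambda>i. mv g v i + v i)"
      using u(2) mv_mconj[OF k g v(1)] by (simp add: mv_add fsupp_mv GLinfD g)
    moreover have "(\<lambda>i. mv g v i + v i) \<in> Rng g"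
      unfolding mem_Rng_iff using v(1) by blast
    ultimately show "w \<in> mv k ` Rng g"
      by blast
  qed
qed

lemma inj_on_mv_Rng: "k \<in> GLinf \<Longrightarrow> g \<in> GLinf \<Longrightarrow> inj_on (mv k) (Rng g)"
  by (rule inj_on_inverseI[where g = "mv (minv k)"]) (simp add: mv_minv_mv fsupp_Rng)

lemma fop_eq_sum: "fop g = (\<lambda>\<xi> x. \<Sum>v\<in>Rng g. (1 / of_nat (card (Rng g))) * uop (vecG v) \<xi> x)"
  unfolding fop_def by (simp add: sum_distrib_left)

lemma bop_fop: "g \<in> GLinf \<Longrightarrow> bop (fop g)"
  unfolding fop_eq_sum by (rule bop_sum_op[OF finite_Rng]) (simp_all add: bop_uop)

lemma fop_l2:
  assumes "g \<in> GLinf" "\<xi> \<in> l2"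
  shows "fop g \<xi> = (\<lambda>h. \<Sum>v\<in>Rng g. (1 / of_nat (card (Rng g))) * \<xi> (gmul (vecG v) h))"
  unfolding fop_eq_sum using assms by (auto simp: uop_l2 ginv_vecG fsupp_Rng intro!: sum.cong)

lemma fop_commute_vecG:
  assumes g: "g \<in> GLinf" and w: "fsupp w"
  shows "fop g \<circ> uop (vecG w) = uop (vecG w) \<circ> fop g"
proof
  fix \<xi>
  show "(fop g \<circ> uop (vecG w)) \<xi> = (uop (vecG w) \<circ> fop g) \<xi>"
  proof (cases "\<xi> \<in> l2")
    case True
    have "gmul (vecG v) (gmul (vecG w) h) = gmul (vecG w) (gmul (vecG v) h)" if "v \<in> Rng g" for v h
      using that w by (simp add: gmul_assoc[symmetric] gmul_vecG fsupp_Rng[OF g] add.commute)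
    then show ?thesis
      using True g w bop_l2[OF bop_fop[OF g] True]
      by (simp add: fop_l2 uop_l2 ginv_vecG l2_translate)
  qed (simp add: uop_outside_l2 bop_outside_l2 bop_zero bop_fop g bop_uop)
qed

lemma uop_vecG_comp_fop:
  assumes g: "g \<in> GLinf" and d: "d \<in> Rng g"
  shows "uop (vecG d) \<circ> fop g = fop g"
proof
  fix \<xi>
  show "(uop (vecG d) \<circ> fop g) \<xi> = fop g \<xi>"
  proof (cases "\<xi> \<in> l2")
    case True
    let ?c = "1 / of_nat (card (Rng g))"
    have "(uop (vecG d) \<circ> fop g) \<xi> = (\<lambda>h. \<Sum>v\<in>Rng g. ?c * \<xi> (gmul (vecG (\<lambda>i. v i + d i)) h))"
      using True d bop_l2[OF bop_fop[OF g] True]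
      by (simp add: fop_l2[OF g] uop_l2 ginv_vecG fsupp_Rng[OF g] gmul_assoc[symmetric] gmul_vecG)
    also have "\<dots> = fop g \<xi>"
    proof -
      have "(\<Sum>v\<in>Rng g. ?c * \<xi> (gmul (vecG (\<lambda>i. v i + d i)) h)) = (\<Sum>v\<in>Rng g. ?c * \<xi> (gmul (vecG v) h))"
        for h
        by (rule sum_Rng_translate[OF g d, of "\<lambda>u. ?c * \<xi> (gmul (vecG u) h)"])
      then show ?thesis
        by (simp add: fop_l2[OF g True])
    qed
    finally show ?thesis .
  qed (simp add: uop_outside_l2 bop_outside_l2 bop_zero bop_fop g bop_uop)
qed

definition ufop :: "mat2 \<Rightarrow> oper" where
  "ufop g = uop (matG g) \<circ> fop g"

lemma bop_ufop: "g \<in> GLinf \<Longrightarrow> bop (ufop g)"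
  unfolding ufop_def by (rule bop_comp[OF bop_uop bop_fop])

(* The last factor lies in R(g - I) (recall -1 = 1 in F_2), so f_g absorbs it. *)

lemma vecG_mv_gmul_matG:
  assumes g: "g \<in> GLinf" and w: "fsupp w"
  shows "gmul (vecG (mv g w)) (matG g)
    = gmul (vecG w) (gmul (matG g) (vecG (\<lambda>i. w i + mv (minv g) w i)))"
proof -
  have "gmul (matG g) (vecG (\<lambda>i. w i + mv (minv g) w i)) = gmul (vecG (\<lambda>i. mv g w i + w i)) (matG g)"
    using g w by (simp add: gmul_matG_vecG fsupp_add fsupp_mv GLinfD mv_add mv_minv_mv)
  moreover have "(\<lambda>i. w i + (mv g w i + w i)) = mv g w"
    by (simp add: fun_eq_iff add.left_commute)
  ultimately show ?thesis
    using g w by (simp add: gmul_assoc[symmetric] gmul_vecG fsupp_add fsupp_mv GLinfD)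
qed

lemma ufop_commute_vecG:
  assumes g: "g \<in> GLinf" and w: "fsupp w"
  shows "ufop g \<circ> uop (vecG w) = uop (vecG w) \<circ> ufop g"
proof -
  have "ufop g \<circ> uop (vecG w) = uop (gmul (matG g) (vecG w)) \<circ> fop g"
    by (simp add: ufop_def comp_assoc fop_commute_vecG[OF g w] uop_gmul)
  also have "\<dots> = uop (vecG w) \<circ> uop (matG g) \<circ> (uop (vecG (\<lambda>i. w i + mv (minv g) w i)) \<circ> fop g)"
    by (simp add: gmul_matG_vecG g w vecG_mv_gmul_matG uop_gmul comp_assoc)
  also have "\<dots> = uop (vecG w) \<circ> ufop g"
    by (simp add: uop_vecG_comp_fop[OF g add_minv_mem_Rng[OF g w]] ufop_def comp_assoc)
  finally show ?thesis .
qed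

lemma fop_conj:
  assumes k: "k \<in> GLinf" and g: "g \<in> GLinf"
  shows "uop (matG k) \<circ> fop g \<circ> uop (ginv (matG k)) = fop (mconj k g)"
proof
  fix \<xi>
  show "(uop (matG k) \<circ> fop g \<circ> uop (ginv (matG k))) \<xi> = fop (mconj k g) \<xi>"
  proof (cases "\<xi> \<in> l2")
    case True
    let ?c = "1 / of_nat (card (Rng g))"
    have conj_vecG: "uop (matG k) \<circ> uop (vecG v) \<circ> uop (ginv (matG k)) = uop (vecG (mv k v))"
      if "v \<in> Rng g" for v
    proof -
      have "gmul (matG k) (gmul (vecG v) (ginv (matG k))) = vecG (mv k v)"
        using that k g by (simp add: gmul_assoc[symmetric] gmul_matG_vecG fsupp_Rng)
          (simp add: gmul_assoc gmul_ginv_right gmul_gone_right)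
      from arg_cong[OF this, of uop] show ?thesis
        by (simp add: uop_gmul comp_assoc)
    qed
    have "(uop (matG k) \<circ> fop g \<circ> uop (ginv (matG k))) \<xi>
        = (\<lambda>x. \<Sum>v\<in>Rng g. ?c * uop (matG k) (uop (vecG v) (uop (ginv (matG k)) \<xi>)) x)"
      unfolding fop_eq_sum comp_apply
      by (rule bop_sum[OF bop_uop finite_Rng[OF g]]) (simp add: bop_l2[OF bop_uop] True)
    also have "\<dots> = (\<lambda>x. \<Sum>v\<in>Rng g. ?c * uop (vecG (mv k v)) \<xi> x)"
      by (intro ext sum.cong refl) (simp add: conj_vecG[THEN fun_cong, unfolded comp_apply])
    also have "\<dots> = fop (mconj k g) \<xi>"
      by (simp add: fop_eq_sum Rng_mconj[OF k g] card_image[OF inj_on_mv_Rng[OF k g]] sum.reindex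
          inj_on_mv_Rng[OF k g])
    finally show ?thesis .
  qed (simp add: uop_outside_l2 bop_outside_l2 bop_zero bop_fop g mconj_GLinf k bop_uop)
qed

lemma ufop_conj:
  assumes k: "k \<in> GLinf" and g: "g \<in> GLinf"
  shows "uop (matG k) \<circ> ufop g \<circ> uop (ginv (matG k)) = ufop (mconj k g)"
proof -
  have "uop (matG k) \<circ> ufop g \<circ> uop (ginv (matG k))
      = uop (matG k) \<circ> uop (matG g) \<circ> (uop (ginv (matG k)) \<circ> uop (matG k)) \<circ> fop g \<circ> uop (ginv (matG k))"
    by (simp add: ufop_def uop_ginv_left comp_idop_left bop_fop g comp_assoc)
  also have "\<dots> = uop (matG (mconj k g)) \<circ> (uop (matG k) \<circ> fop g \<circ> uop (ginv (matG k)))"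
    by (simp add: matG_mconj k g uop_gmul comp_assoc)
  also have "\<dots> = ufop (mconj k g)"
    by (simp add: fop_conj k g ufop_def)
  finally show ?thesis .
qed

section \<open>The algebra \<open>M\<^sub>e\<^sub>x\<^sub>o\<close>\<close>

definition Mexo_gens :: "oper set" where
  "Mexo_gens = LG Vsub \<union> ufop ` GLinf"

lemma Mexo_eq_vNgen: "Mexo = vNgen Mexo_gens"
  unfolding Mexo_def Mexo_gens_def ufop_def by (simp add: setcompr_eq_image)

lemma Mexo_gens_subset_bop: "Mexo_gens \<subseteq> Collect bop"
  unfolding Mexo_gens_def LG_def using vNgen_subset_bop bop_ufop by blast

lemma is_vNa_Mexo: "is_vNa Mexo"
  unfolding Mexo_eq_vNgen by (rule is_vNa_vNgen[OF Mexo_gens_subset_bop])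

lemma Mexo_subset_LG_UNIV: "Mexo \<subseteq> LG UNIV"
  unfolding Mexo_eq_vNgen
proof (rule vNgen_least[OF is_vNa_LG])
  have "fop g \<in> LG UNIV" if "g \<in> GLinf" for g
    unfolding fop_eq_sum using that by (intro is_vNa_sum[OF is_vNa_LG finite_Rng] uop_mem_LG) auto
  then have "ufop g \<in> LG UNIV" if "g \<in> GLinf" for g
    unfolding ufop_def using that by (intro is_vNa_comp[OF is_vNa_LG] uop_mem_LG) auto
  then show "Mexo_gens \<subseteq> LG UNIV"
    unfolding Mexo_gens_def using LG_mono[of Vsub UNIV] by auto
qed

lemma adj_image_uop_Vsub: "adj ` uop ` Vsub = uop ` Vsub"
  unfolding image_image by (rule image_cong) (simp_all add: adj_uop ginv_Vsub)

lemma LG_Vsub_eq: "LG Vsub = comm (comm (uop ` Vsub))"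
  unfolding LG_def vNgen_def by (simp add: adj_image_uop_Vsub)

lemma uop_Vsub_subset_comm: "uop ` Vsub \<subseteq> comm (uop ` Vsub)"
proof
  fix U assume "U \<in> uop ` Vsub"
  then obtain a where a: "a \<in> Vsub" "U = uop a"
    by blast
  show "U \<in> comm (uop ` Vsub)"
  proof (rule commI)
    show "bop U"
      using a by (simp add: bop_uop)
    fix A assume "A \<in> uop ` Vsub"
    then obtain b where "b \<in> Vsub" "A = uop b"
      by blast
    then show "U \<circ> A = A \<circ> U"
      using a by (simp flip: uop_gmul add: Vsub_gmul_commute)
  qed
qed

lemma LG_Vsub_subset_comm: "LG Vsub \<subseteq> comm (uop ` Vsub)"
  unfolding LG_Vsub_eq by (rule comm_antimono[OF uop_Vsub_subset_comm])

lemma Mexo_gens_commute_Vsub: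
  assumes "T \<in> Mexo_gens" "b \<in> Vsub"
  shows "T \<circ> uop b = uop b \<circ> T"
proof (cases "T \<in> LG Vsub")
  case True
  then show ?thesis
    using assms(2) LG_Vsub_subset_comm commD by blast
next
  case False
  then obtain g where "g \<in> GLinf" "T = ufop g"
    using assms(1) by (auto simp: Mexo_gens_def)
  moreover obtain w where "fsupp w" "b = vecG w"
    using assms(2) by (auto simp: Vsub_def)
  ultimately show ?thesis
    by (simp add: ufop_commute_vecG)
qed

lemma adj_commute_uop:
  assumes T: "bop T" and "T \<circ> uop (ginv b) = uop (ginv b) \<circ> T"
  shows "adj T \<circ> uop b = uop b \<circ> adj T"
proof -
  have "adj T \<circ> uop b = adj (adj (uop b) \<circ> T)"
    by (simp add: adj_comp T bop_uop bop_adj adj_adj)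
  also have "adj (uop b) \<circ> T = T \<circ> adj (uop b)"
    using assms(2) by (simp add: adj_uop)
  also have "adj (T \<circ> adj (uop b)) = uop b \<circ> adj T"
    by (simp add: adj_comp T bop_uop bop_adj adj_adj)
  finally show ?thesis .
qed

lemma uop_Vsub_subset_comm_Mexo_gens: "uop ` Vsub \<subseteq> comm (Mexo_gens \<union> adj ` Mexo_gens)"
proof
  fix U assume "U \<in> uop ` Vsub"
  then obtain b where b: "b \<in> Vsub" "U = uop b"
    by blast
  show "U \<in> comm (Mexo_gens \<union> adj ` Mexo_gens)"
  proof (rule commI)
    show "bop U"
      using b by (simp add: bop_uop)
    fix A assume A: "A \<in> Mexo_gens \<union> adj ` Mexo_gens"
    show "U \<circ> A = A \<circ> U"
    proof (cases "A \<in> Mexo_gens")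
      case True
      then show ?thesis
        using Mexo_gens_commute_Vsub b by simp
    next
      case False
      then obtain T where T: "T \<in> Mexo_gens" "A = adj T"
        using A by blast
      have "T \<circ> uop (ginv b) = uop (ginv b) \<circ> T"
        using Mexo_gens_commute_Vsub[OF T(1)] b(1) by (simp add: ginv_Vsub)
      then show ?thesis
        using adj_commute_uop[of T b] T Mexo_gens_subset_bop b by auto
    qed
  qed
qed

lemma Mexo_subset_comm_Vsub: "Mexo \<subseteq> comm (uop ` Vsub)"
  unfolding Mexo_eq_vNgen vNgen_def by (rule comm_antimono[OF uop_Vsub_subset_comm_Mexo_gens])

lemma Mexo_gens_subset_Mexo: "Mexo_gens \<subseteq> Mexo"
  unfolding Mexo_eq_vNgen by (rule subset_vNgen[OF Mexo_gens_subset_bop])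

lemma LG_Vsub_conj:
  assumes "T \<in> LG Vsub"
  shows "uop a \<circ> T \<circ> uop (ginv a) \<in> LG Vsub"
  unfolding LG_def
proof (rule conj_uop_mem_vNgen)
  show "uop ` Vsub \<subseteq> Collect bop"
    by (auto simp: bop_uop)
  show "T \<in> vNgen (uop ` Vsub)"
    using assms by (simp add: LG_def)
  fix A assume "A \<in> uop ` Vsub \<union> adj ` uop ` Vsub"
  then obtain b where b: "b \<in> Vsub" "A = uop b"
    by (auto simp: adj_image_uop_Vsub)
  have "uop a \<circ> A \<circ> uop (ginv a) = uop (gmul a (gmul b (ginv a)))"
    by (simp add: b(2) uop_gmul comp_assoc)
  then show "uop a \<circ> A \<circ> uop (ginv a) \<in> vNgen (uop ` Vsub)"
    using Vsub_conj[OF b(1), of a] subset_vNgen[of "uop ` Vsub"] bop_uop by auto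
qed

lemma matG_conj_Mexo_gens:
  assumes k: "k \<in> GLinf" and A: "A \<in> Mexo_gens \<union> adj ` Mexo_gens"
  shows "uop (matG k) \<circ> A \<circ> uop (ginv (matG k)) \<in> Mexo"
proof -
  have gen: "uop (matG k) \<circ> B \<circ> uop (ginv (matG k)) \<in> Mexo" if B: "B \<in> Mexo_gens" for B
  proof (cases "B \<in> LG Vsub")
    case True
    then show ?thesis
      using LG_Vsub_conj Mexo_gens_subset_Mexo unfolding Mexo_gens_def by blast
  next
    case False
    then obtain g where "g \<in> GLinf" "B = ufop g"
      using B by (auto simp: Mexo_gens_def)
    then show ?thesis
      using ufop_conj[OF k] mconj_GLinf[OF k] Mexo_gens_subset_Mexo unfolding Mexo_gens_def by auto
  qed
  show ?thesis
  proof (cases "A \<in> Mexo_gens")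
    case False
    then obtain B where B: "B \<in> Mexo_gens" "A = adj B"
      using A by blast
    then have "uop (matG k) \<circ> A \<circ> uop (ginv (matG k)) = adj (uop (matG k) \<circ> B \<circ> uop (ginv (matG k)))"
      using Mexo_gens_subset_bop by (auto simp: adj_comp bop_comp bop_uop adj_uop ginv_ginv comp_assoc)
    then show ?thesis
      using gen[OF B(1)] is_vNa_Mexo by (simp add: is_vNa_def)
  qed (rule gen)
qed

lemma matG_conj_Mexo:
  assumes k: "k \<in> GLinf" and T: "T \<in> Mexo"
  shows "uop (matG k) \<circ> T \<circ> uop (ginv (matG k)) \<in> Mexo"
  unfolding Mexo_eq_vNgen
proof (rule conj_uop_mem_vNgen[OF Mexo_gens_subset_bop])
  show "T \<in> vNgen Mexo_gens"
    using T by (simp add: Mexo_eq_vNgen)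
  show "uop (matG k) \<circ> A \<circ> uop (ginv (matG k)) \<in> vNgen Mexo_gens"
    if "A \<in> Mexo_gens \<union> adj ` Mexo_gens" for A
    using matG_conj_Mexo_gens[OF k that] by (simp add: Mexo_eq_vNgen)
qed

lemma G_invariant_Mexo: "G_invariant Mexo"
  unfolding G_invariant_def
proof (intro allI ballI)
  fix x T assume T: "T \<in> Mexo"
  define w where "w = gvec x"
  define k where "k = gmat x"
  define T' where "T' = uop (matG k) \<circ> T \<circ> uop (ginv (matG k))"
  have T': "T' \<in> Mexo"
    unfolding T'_def k_def by (rule matG_conj_Mexo[OF gmat_GLinf T])
  then have "bop T'"
    unfolding Mexo_eq_vNgen using vNgen_subset_bop by blast
  have "uop (vecG w) \<in> uop ` Vsub"
    by (auto simp: Vsub_def w_def fsupp_gvec)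
  then have comm: "T' \<circ> uop (vecG w) = uop (vecG w) \<circ> T'"
    by (rule commD[OF subsetD[OF Mexo_subset_comm_Vsub T']])
  have x: "x = gmul (vecG w) (matG k)"
    by (simp add: w_def k_def vecG_gmul_matG)
  have "uop x \<circ> T \<circ> adj (uop x) = uop (vecG w) \<circ> T' \<circ> uop (ginv (vecG w))"
    by (simp only: adj_uop) (simp add: x ginv_gmul uop_gmul T'_def comp_assoc)
  also have "\<dots> = T' \<circ> (uop (vecG w) \<circ> uop (ginv (vecG w)))"
    by (simp add: comm[symmetric] comp_assoc[symmetric])
  also have "\<dots> = T'"
    by (simp add: uop_ginv_right comp_idop_right \<open>bop T'\<close>)
  finally show "uop x \<circ> T \<circ> adj (uop x) \<in> Mexo"
    using T' by simp
qed

section \<open>\<open>M\<^sub>e\<^sub>x\<^sub>o\<close> is not a group von Neumann algebra\<close>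

lemma LG_subset_Vsub_of_subset_comm:
  assumes "LG N \<subseteq> comm (uop ` Vsub)"
  shows "N \<subseteq> Vsub"
proof
  fix x assume "x \<in> N"
  then have x: "uop x \<in> comm (uop ` Vsub)"
    using assms uop_mem_LG by blast
  show "x \<in> Vsub"
  proof (rule centraliser_Vsub)
    fix w :: vec2 assume "fsupp w"
    then have "uop (vecG w) \<in> uop ` Vsub"
      by (auto simp: Vsub_def)
    then have "uop x \<circ> uop (vecG w) = uop (vecG w) \<circ> uop x"
      by (rule commD[OF x])
    then show "gmul x (vecG w) = gmul (vecG w) x"
      by (intro uop_inj) (simp add: uop_gmul)
  qed
qed

definition projV :: oper where
  "projV \<xi> = (if \<xi> \<in> l2 then (\<lambda>h. if h \<in> Vsub then \<xi> h else 0) else (\<lambda>_. 0))"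

lemma bop_projV: "bop projV"
proof (rule bopI[where C = 1])
  fix \<xi> assume \<xi>: "\<xi> \<in> l2"
  have le: "cmod (if h \<in> Vsub then \<xi> h else 0) \<le> cmod (\<xi> h)" for h
    by simp
  show "projV \<xi> \<in> l2"
    using l2_mono[OF \<xi> le] \<xi> by (simp add: projV_def)
  show "lnorm (projV \<xi>) \<le> 1 * lnorm \<xi>"
    using sqnorm_mono[OF \<xi> le] \<xi> by (simp add: projV_def lnorm_eq_sqrt_sqnorm)
qed (simp_all add: projV_def l2_lin fun_eq_iff)

lemma projV_mem_comm: "projV \<in> comm (comm (comm (uop ` Vsub)))"
proof -
  have "projV \<in> comm (uop ` Vsub)"
  proof (rule commI[OF bop_projV])
    fix A assume "A \<in> uop ` Vsub"
    then obtain v where v: "v \<in> Vsub" "A = uop v"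
      by blast
    have shift: "gmul (ginv v) h \<in> Vsub \<longleftrightarrow> h \<in> Vsub" for h
      using v(1) by (simp add: Vsub_iff gmat_gmul gmat_ginv minv_idm)
    show "projV \<circ> A = A \<circ> projV"
      unfolding v(2)
    proof
      fix \<xi>
      show "(projV \<circ> uop v) \<xi> = (uop v \<circ> projV) \<xi>"
      proof (cases "\<xi> \<in> l2")
        case True
        then have "uop v \<xi> \<in> l2" "projV \<xi> \<in> l2"
          by (simp_all add: bop_l2[OF bop_uop] bop_l2[OF bop_projV])
        then show ?thesis
          using True shift by (simp add: projV_def uop_l2 fun_eq_iff)
      qed (simp add: projV_def uop_def)
    qed
  qed
  then show ?thesis
    by (subst comm_comm_comm) (auto simp: bop_uop)
qed

lemma vecG_eq_gone_iff:
  assumes "fsupp v"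
  shows "vecG v = gone \<longleftrightarrow> v = (\<lambda>_. 0)"
proof
  assume "vecG v = gone"
  from arg_cong[OF this, of gvec] show "v = (\<lambda>_. 0)"
    by (simp add: gvec_vecG assms gvec_gone)
qed (simp add: vecG_def gone_def)

lemma ufop_delta_gone_at_matG:
  assumes g: "g \<in> GLinf"
  shows "ufop g (delta gone) (matG g) = 1 / of_nat (card (Rng g))"
proof -
  have "ufop g (delta gone) (matG g) = (\<Sum>v\<in>Rng g. 1 / of_nat (card (Rng g)) * delta gone (vecG v))"
    using g bop_l2[OF bop_fop[OF g] delta_l2]
    by (simp add: ufop_def fop_l2 uop_l2 ginv_ginv gmul_ginv_left gmul_gone_right)
  also have "\<dots> = (\<Sum>v\<in>Rng g. if v = (\<lambda>_. 0) then 1 / of_nat (card (Rng g)) else 0)"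
    by (intro sum.cong refl) (simp add: delta_def vecG_eq_gone_iff fsupp_Rng[OF g])
  also have "\<dots> = 1 / of_nat (card (Rng g))"
    using finite_Rng[OF g] zero_in_Rng by simp
  finally show ?thesis .
qed

lemma ufop_not_mem_LG_Vsub:
  assumes g: "g \<in> GLinf" "g \<noteq> idm"
  shows "ufop g \<notin> LG Vsub"
proof
  assume "ufop g \<in> LG Vsub"
  then have "ufop g \<circ> projV = projV \<circ> ufop g"
    using projV_mem_comm unfolding LG_Vsub_eq by (auto simp: comm_def)
  moreover have "projV (delta gone) = delta gone"
    using delta_l2 by (simp add: projV_def fun_eq_iff delta_def gone_Vsub)
  ultimately have "ufop g (delta gone) (matG g) = projV (ufop g (delta gone)) (matG g)"
    by (metis comp_apply)
  also have "\<dots> = 0"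
    using g by (simp add: projV_def Vsub_iff gmat_matG)
  finally show False
    using card_Rng_pos[OF g(1)] by (simp add: ufop_delta_gone_at_matG[OF g(1)])
qed

definition swap01 :: mat2 where
  "swap01 = (\<lambda>i j. idm (Transposition.transpose 0 1 i) j)"

lemma mm_swap01: "mm swap01 B = (\<lambda>i k. B (Transposition.transpose 0 1 i) k)"
proof (intro ext)
  fix i k
  have "{j. swap01 i j \<noteq> 0} = {Transposition.transpose 0 1 i}"
    by (auto simp: swap01_def idm_def)
  then show "mm swap01 B i k = B (Transposition.transpose 0 1 i) k"
    by (simp add: mm_def swap01_def idm_def)
qed

lemma swap01_GLinf: "swap01 \<in> GLinf"
proof -
  have "{(i, j). swap01 i j \<noteq> idm i j} \<subseteq> {0, 1} \<times> {0, 1}"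
    by (auto simp: swap01_def idm_def Transposition.transpose_def split: if_splits)
  then have "finitary swap01"
    unfolding finitary_def by (rule finite_subset) simp
  moreover have "mm swap01 swap01 = idm"
    unfolding mm_swap01 by (simp add: swap01_def transpose_involutory)
  ultimately show ?thesis
    unfolding GLinf_def by blast
qed

lemma swap01_ne_idm: "swap01 \<noteq> idm"
proof
  assume "swap01 = idm"
  then have "swap01 0 1 = idm 0 1"
    by simp
  then show False
    by (simp add: swap01_def idm_def Transposition.transpose_def)
qed

lemma Mexo_ne_LG: "Mexo \<noteq> LG N"
proof
  assume Mexo: "Mexo = LG N"
  then have "N \<subseteq> Vsub"
    using Mexo_subset_comm_Vsub by (intro LG_subset_Vsub_of_subset_comm) simp
  moreover have "ufop swap01 \<in> Mexo"
    using swap01_GLinf Mexo_gens_subset_Mexo by (auto simp: Mexo_gens_def)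
  ultimately show False
    using Mexo LG_mono[of N Vsub] ufop_not_mem_LG_Vsub[OF swap01_GLinf swap01_ne_idm] by blast
qed

theorem lemma4p14:
  shows "is_vNa Mexo \<and> Mexo \<subseteq> LG UNIV \<and> G_invariant Mexo
         \<and> (\<forall>N. normal N Ggrp \<longrightarrow> Mexo \<noteq> LG N)"
  using is_vNa_Mexo Mexo_subset_LG_UNIV G_invariant_Mexo Mexo_ne_LG by blast

end
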